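(* The homology class $[u_{\mathrm{edge}}(\bar e)]\in H_1(\Sigma;\mathbb Z)$ is divisible by $3$.
   Context: Setup: $D\subset\mathbb R^3$ regular dodecahedron centered at $0$, $\mathcal I\subset\mathrm{SO}(3)$ its rotation group, $\iota=-\mathrm{id}$. $\mathcal K$ = the five inscribed cubes; $V_o:=\mathbb Z^{\mathcal K}/\mathbb Z(\sum_{e\in\mathcal K}e)$, $\bar e$ the image of $e$. $\hat\Sigma$: surface $D$ with an $\mathcal I$- and $\iota$-invariant small open equilateral triangle removed around each vertex; $\Sigma$: $\hat\Sigma$ with boundary points $p\sim\iota p$ identified (closed oriented genus-10 surface). For an oriented edge $y$ of $D$ with initial point $in(y)$, $\delta_y$ is the loop in $\Sigma$ formed by the edge-type cell $y$ and the cell $\iota y$. For fixed $e\in\mathcal K$, $E$ is one of the two 4-element sets of pairwise non-adjacent (in the cube) vertices of $e$. $u_{\mathrm{edge}}:V_o\to Z_1(\Sigma)$ is the $\mathbb Z\mathcal I$-homomorphism with $u_{\mathrm{edge}}(\bar e)=\sum_{x\in E}\sum_{y:\,in(y)=x}\delta_y$. *)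

theory Defs
  imports "HOL-Analysis.Analysis" "HOL-Homology.Homology"
begin

definition quotient_top :: "'a topology \<Rightarrow> ('a \<Rightarrow> 'b) \<Rightarrow> 'b topology" where
  "quotient_top X q = topology (\<lambda>U. U \<subseteq> q ` topspace X \<and> openin X {x \<in> topspace X. q x \<in> U})"

definition gold :: real where "gold = (1 + sqrt 5) / 2"

text \<open>Standard vertex set of a regular dodecahedron centred at 0 (circumradius sqrt 3,
 edge length sqrt 5 - 1).\<close>
definition dodec_vertices :: "(real^3) set" where
  "dodec_vertices =
     {vector [a, b, d] | a b d. a \<in> {-1,1} \<and> b \<in> {-1,1} \<and> d \<in> {-1,1}}
   \<union> {vector [0, a / gold, b * gold] | a b. a \<in> {-1,1} \<and> b \<in> {-1,1}}
   \<union> {vector [a / gold, b * gold, 0] | a b. a \<in> {-1,1} \<and> b \<in> {-1,1}}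
   \<union> {vector [a * gold, 0, b / gold] | a b. a \<in> {-1,1} \<and> b \<in> {-1,1}}"

definition dodecahedron :: "(real^3) set" where
  "dodecahedron = convex hull dodec_vertices"

definition dodec_adjacent :: "real^3 \<Rightarrow> real^3 \<Rightarrow> bool" where
  "dodec_adjacent v w \<longleftrightarrow> v \<in> dodec_vertices \<and> w \<in> dodec_vertices \<and> dist v w = sqrt 5 - 1"

definition is_cube :: "(real^3) set \<Rightarrow> bool" where
  "is_cube S \<longleftrightarrow> (\<exists>m u1 u2 u3. u1 \<noteq> 0 \<and> norm u2 = norm u1 \<and> norm u3 = norm u1 \<and>
      u1 \<bullet> u2 = 0 \<and> u1 \<bullet> u3 = 0 \<and> u2 \<bullet> u3 = 0 \<and>
      S = {m + e1 *\<^sub>R u1 + e2 *\<^sub>R u2 + e3 *\<^sub>R u3 | e1 e2 e3.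
              e1 \<in> {-1,1} \<and> e2 \<in> {-1,1} \<and> e3 \<in> {-1,1}})"

definition inscribed_cubes :: "(real^3) set set" where
  "inscribed_cubes = {S. S \<subseteq> dodec_vertices \<and> is_cube S}"

text \<open>Adjacency of vertices of a cube (joined by a cube edge, i.e. at minimal distance).\<close>
definition cube_adjacent :: "(real^3) set \<Rightarrow> real^3 \<Rightarrow> real^3 \<Rightarrow> bool" where
  "cube_adjacent S x y \<longleftrightarrow> x \<in> S \<and> y \<in> S \<and> x \<noteq> y \<and> (\<forall>z\<in>S. z \<noteq> x \<longrightarrow> dist x y \<le> dist x z)"

text \<open>The parameter c (with sqrt 5 < c < 3) fixes the size of the removed triangles:
 around the vertex v the open cap of the surface of D with x \<bullet> v > c is removed.\<close>
definition Sigma_hat :: "real \<Rightarrow> (real^3) set" where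
  "Sigma_hat c = {x \<in> frontier dodecahedron. \<forall>v\<in>dodec_vertices. x \<bullet> v \<le> c}"

definition Sigma_bdry :: "real \<Rightarrow> (real^3) set" where
  "Sigma_bdry c = {x \<in> Sigma_hat c. \<exists>v\<in>dodec_vertices. x \<bullet> v = c}"

definition sigma_class :: "real \<Rightarrow> real^3 \<Rightarrow> (real^3) set" where
  "sigma_class c x = {y \<in> Sigma_hat c. y = x \<or> (x \<in> Sigma_bdry c \<and> y = - x)}"

definition Sigma_top :: "real \<Rightarrow> (real^3) set topology" where
  "Sigma_top c = quotient_top (top_of_set (Sigma_hat c)) (sigma_class c)"

definition seg_simplex :: "real \<Rightarrow> real^3 \<Rightarrow> real^3 \<Rightarrow> (nat \<Rightarrow> real) \<Rightarrow> (real^3) set" where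
  "seg_simplex c p q = restrict (\<lambda>t. sigma_class c (p + t 1 *\<^sub>R (q - p))) (standard_simplex 1)"

text \<open>Fraction of an edge of D cut off by a removed triangle.\<close>
definition cut_frac :: "real \<Rightarrow> real" where
  "cut_frac c = (3 - c) / (3 - sqrt 5)"

definition edge_cell :: "real \<Rightarrow> real^3 \<Rightarrow> real^3 \<Rightarrow> (nat \<Rightarrow> real) \<Rightarrow> (real^3) set" where
  "edge_cell c v w = seg_simplex c (v + cut_frac c *\<^sub>R (w - v)) (w + cut_frac c *\<^sub>R (v - w))"

text \<open>delta_y: the loop traversing the cell y and then the cell iota y backwards.\<close>
definition delta :: "real \<Rightarrow> real^3 \<Rightarrow> real^3 \<Rightarrow> (real^3) set chain" where
  "delta c v w = frag_of (edge_cell c v w) - frag_of (edge_cell c (- v) (- w))"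

definition u_edge :: "real \<Rightarrow> (real^3) set \<Rightarrow> (real^3) set chain" where
  "u_edge c E = (\<Sum>x\<in>E. \<Sum>w\<in>{w. dodec_adjacent x w}. delta c x w)"

end

theory Submission
  imports Defs
begin

text \<open>Four pairwise non-adjacent vertices of an inscribed cube form a regular tetrahedron (all
  mutual inner products \<open>-1\<close>), and the dodecahedron has exactly ten of these, in five antipodal
  pairs; since \<open>u_edge\<close> changes sign under the antipodal map, five tetrahedra remain. For each
  of them an explicit certificate gives a 2-chain \<open>D\<close>, a signed sum of eight triangulated face
  pieces, and a 1-chain \<open>z\<close>, a signed sum of eight edge cells, with \<open>u_edge(E) = \<partial>D + 3 z\<close>.
  Then \<open>3 \<partial>z = \<partial>u_edge(E) - \<partial>\<partial>D = 0\<close>, so \<open>z\<close> is a cycle and \<open>[u_edge(E)] = 3 [z]\<close>.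
  The chain identity is verified by evaluation: vertices have exact coordinates in \<open>\<int>[\<surd>5]\<close>,
  and chains are compared as combinations of segments between corner points, where a segment
  along a cap boundary is identified with its antipode, as in \<open>\<Sigma>\<close>. When the caps are so large
  that they meet along the edges, every edge cell lies in the identified boundary and
  \<open>u_edge(E) = 0\<close>.\<close>

section \<open>Exact arithmetic in \<open>\<int>[\<surd>5]\<close>\<close>

type_synonym zsqrt5 = "int \<times> int"

definition zsqrt5_val :: "zsqrt5 \<Rightarrow> real" where
  "zsqrt5_val x = of_int (fst x) + of_int (snd x) * sqrt 5"

definition zsqrt5_add :: "zsqrt5 \<Rightarrow> zsqrt5 \<Rightarrow> zsqrt5" where
  "zsqrt5_add x y = (fst x + fst y, snd x + snd y)"

definition zsqrt5_diff :: "zsqrt5 \<Rightarrow> zsqrt5 \<Rightarrow> zsqrt5" where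
  "zsqrt5_diff x y = (fst x - fst y, snd x - snd y)"

definition zsqrt5_mult :: "zsqrt5 \<Rightarrow> zsqrt5 \<Rightarrow> zsqrt5" where
  "zsqrt5_mult x y = (fst x * fst y + 5 * snd x * snd y, fst x * snd y + snd x * fst y)"

fun zsqrt5_nonneg :: "zsqrt5 \<Rightarrow> bool" where
  "zsqrt5_nonneg (p, q) \<longleftrightarrow>
     (0 \<le> p \<and> 0 \<le> q) \<or> (0 \<le> p \<and> q < 0 \<and> 5 * q\<^sup>2 \<le> p\<^sup>2) \<or> (p < 0 \<and> 0 \<le> q \<and> p\<^sup>2 \<le> 5 * q\<^sup>2)"

lemma zsqrt5_val_add: "zsqrt5_val (zsqrt5_add x y) = zsqrt5_val x + zsqrt5_val y"
  by (simp add: zsqrt5_add_def zsqrt5_val_def algebra_simps)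

lemma zsqrt5_val_diff: "zsqrt5_val (zsqrt5_diff x y) = zsqrt5_val x - zsqrt5_val y"
  by (simp add: zsqrt5_diff_def zsqrt5_val_def algebra_simps)

lemma zsqrt5_val_mult: "zsqrt5_val (zsqrt5_mult x y) = zsqrt5_val x * zsqrt5_val y"
  by (simp add: zsqrt5_mult_def zsqrt5_val_def algebra_simps)

lemma zsqrt5_nonneg_val:
  assumes "zsqrt5_nonneg x"
  shows "0 \<le> zsqrt5_val x"
proof (cases x)
  case (Pair p q)
  let ?s = "of_int q * sqrt 5 :: real"
  have sq: "?s\<^sup>2 = of_int (5 * q\<^sup>2)"
    by (simp add: power_mult_distrib)
  have "\<bar>?s\<bar> \<le> \<bar>of_int p\<bar>" if "5 * q\<^sup>2 \<le> p\<^sup>2"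
    using that by (simp only: abs_le_square_iff sq flip: of_int_power of_int_le_iff)
  moreover have "\<bar>of_int p\<bar> \<le> \<bar>?s\<bar>" if "p\<^sup>2 \<le> 5 * q\<^sup>2"
    using that by (simp only: abs_le_square_iff sq flip: of_int_power of_int_le_iff)
  moreover have "0 \<le> ?s \<longleftrightarrow> 0 \<le> q"
    by (simp add: zero_le_mult_iff)
  ultimately show ?thesis
    using assms Pair by (auto simp: zsqrt5_val_def)
qed

lemma sqrt5_bounds: "2 < sqrt (5::real)" "sqrt 5 < 3"
  by (simp_all add: real_less_rsqrt real_less_lsqrt)

section \<open>The vertices of the dodecahedron\<close>

type_synonym zsqrt5_vec = "zsqrt5 \<times> zsqrt5 \<times> zsqrt5"

text \<open>A vector is coded by twice its coordinates; for the vertices of \<open>D\<close> (coordinates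
  \<open>\<plusminus>1, \<plusminus>gold, \<plusminus>1/gold = \<plusminus>(\<surd>5 - 1)/2\<close>) these lie in \<open>\<int>[\<surd>5]\<close>.\<close>
definition vec_of_code :: "zsqrt5_vec \<Rightarrow> real^3" where
  "vec_of_code x = vector [zsqrt5_val (fst x) / 2, zsqrt5_val (fst (snd x)) / 2, zsqrt5_val (snd (snd x)) / 2]"

definition code_inner :: "zsqrt5_vec \<Rightarrow> zsqrt5_vec \<Rightarrow> zsqrt5" where
  "code_inner x y = zsqrt5_add (zsqrt5_add (zsqrt5_mult (fst x) (fst y))
     (zsqrt5_mult (fst (snd x)) (fst (snd y)))) (zsqrt5_mult (snd (snd x)) (snd (snd y)))"

definition code_neg :: "zsqrt5_vec \<Rightarrow> zsqrt5_vec" where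
  "code_neg x = ((- fst (fst x), - snd (fst x)), (- fst (fst (snd x)), - snd (fst (snd x))),
     (- fst (snd (snd x)), - snd (snd (snd x))))"

lemma inner_vector_3: "(vector [a1, a2, a3] :: real^3) \<bullet> vector [b1, b2, b3] = a1 * b1 + a2 * b2 + a3 * b3"
  by (simp add: inner_vec_def sum_3)

lemma inner_vec_of_code: "vec_of_code x \<bullet> vec_of_code y = zsqrt5_val (code_inner x y) / 4"
  by (simp add: vec_of_code_def inner_vector_3 code_inner_def zsqrt5_val_add zsqrt5_val_mult field_simps)

lemma vec_of_code_neg: "vec_of_code (code_neg x) = - vec_of_code x"
  by (simp add: vec_of_code_def code_neg_def zsqrt5_val_def vec_eq_iff forall_3 vector_def algebra_simps)

definition vertex_codes :: "zsqrt5_vec list" where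
  "vertex_codes = [((-2,0),(-2,0),(-2,0)), ((-2,0),(-2,0),(2,0)), ((-2,0),(2,0),(-2,0)),
    ((-2,0),(2,0),(2,0)), ((2,0),(-2,0),(-2,0)), ((2,0),(-2,0),(2,0)), ((2,0),(2,0),(-2,0)),
    ((2,0),(2,0),(2,0)), ((0,0),(1,-1),(-1,-1)), ((1,-1),(-1,-1),(0,0)), ((-1,-1),(0,0),(1,-1)),
    ((0,0),(1,-1),(1,1)), ((1,-1),(1,1),(0,0)), ((-1,-1),(0,0),(-1,1)), ((0,0),(-1,1),(-1,-1)),
    ((-1,1),(-1,-1),(0,0)), ((1,1),(0,0),(1,-1)), ((0,0),(-1,1),(1,1)), ((-1,1),(1,1),(0,0)),
    ((1,1),(0,0),(-1,1))]"

definition antipode_codes :: "nat list" where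
  "antipode_codes = [7, 6, 5, 4, 3, 2, 1, 0, 17, 18, 19, 14, 15, 16, 11, 12, 13, 8, 9, 10]"

definition vertex :: "nat \<Rightarrow> real^3" where
  "vertex i = vec_of_code (vertex_codes ! i)"

definition antipode :: "nat \<Rightarrow> nat" where
  "antipode i = antipode_codes ! i"

definition vertex_inner_code :: "nat \<Rightarrow> nat \<Rightarrow> zsqrt5" where
  "vertex_inner_code i j = code_inner (vertex_codes ! i) (vertex_codes ! j)"

lemma vertex_inner_code_table:
  "list_all (\<lambda>i. list_all (\<lambda>j. if i = j then vertex_inner_code i j = (12, 0)
     else vertex_inner_code i j \<in> set [(0,4), (4,0), (-4,0), (0,-4), (-12,0)]) [0..<20]) [0..<20]"
  unfolding vertex_inner_code_def by code_simp

lemma antipode_codes_correct: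
  "list_all (\<lambda>i. antipode i < 20 \<and> vertex_codes ! antipode i = code_neg (vertex_codes ! i)) [0..<20]"
  unfolding antipode_def by code_simp

lemma list_all_upt_nth: "list_all P [0..<n] \<Longrightarrow> i < n \<Longrightarrow> P i"
  by (simp add: list_all_iff)

lemma inner_vertex_code: "vertex i \<bullet> vertex j = zsqrt5_val (vertex_inner_code i j) / 4"
  by (simp add: vertex_def vertex_inner_code_def inner_vec_of_code)

lemma vertex_inner_code_cases:
  assumes "i < 20" "j < 20"
  shows "vertex_inner_code i j \<in> {(12,0), (0,4), (4,0), (-4,0), (0,-4), (-12,0)}"
    and "vertex_inner_code i j = (12,0) \<longleftrightarrow> i = j"
  using list_all_upt_nth[OF list_all_upt_nth[OF vertex_inner_code_table assms(1)] assms(2)]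
  by (auto split: if_splits)

text \<open>The six possible inner products \<open>3, \<surd>5, 1, -1, -\<surd>5, -3\<close> are distinct reals, so an
  inner product of vertices determines its code.\<close>
lemma inner_vertex_eq_iff:
  assumes "i < 20" "j < 20" "q \<in> {(12,0), (0,4), (4,0), (-4,0), (0,-4), (-12,0)}"
  shows "vertex i \<bullet> vertex j = zsqrt5_val q / 4 \<longleftrightarrow> vertex_inner_code i j = q"
  using vertex_inner_code_cases(1)[OF assms(1,2)] assms(3) sqrt5_bounds
  by (auto simp: inner_vertex_code zsqrt5_val_def)

lemma inner_vertex_self: "i < 20 \<Longrightarrow> vertex i \<bullet> vertex i = 3"
  using vertex_inner_code_cases(2)[of i i] by (simp add: inner_vertex_code zsqrt5_val_def)

lemma inner_vertex_le_sqrt5: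
  assumes "i < 20" "j < 20" "i \<noteq> j"
  shows "vertex i \<bullet> vertex j \<le> sqrt 5"
  using vertex_inner_code_cases[OF assms(1,2)] assms(3) sqrt5_bounds
  by (auto simp: inner_vertex_code zsqrt5_val_def)

lemma vertex_inj: "inj_on vertex {..<20}"
proof (rule inj_onI)
  fix i j assume "i \<in> {..<20}" "j \<in> {..<20}" "vertex i = vertex j"
  then show "i = j"
    using inner_vertex_le_sqrt5[of i j] inner_vertex_self[of i] sqrt5_bounds by force
qed

lemma antipode_lt: "i < 20 \<Longrightarrow> antipode i < 20"
  using list_all_upt_nth[OF antipode_codes_correct] by simp

lemma vertex_antipode: "i < 20 \<Longrightarrow> vertex (antipode i) = - vertex i"
  using list_all_upt_nth[OF antipode_codes_correct] by (simp add: vertex_def vec_of_code_neg)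

lemma gold_pos: "0 < gold"
  unfolding gold_def by (simp add: add_pos_nonneg)

lemma zsqrt5_val_half_codes:
  "zsqrt5_val (0,0) / 2 = 0" "zsqrt5_val (2,0) / 2 = 1" "zsqrt5_val (-2,0) / 2 = -1"
  "zsqrt5_val (1,1) / 2 = gold" "zsqrt5_val (-1,-1) / 2 = -gold"
  "zsqrt5_val (-1,1) / 2 = 1 / gold" "zsqrt5_val (1,-1) / 2 = -1 / gold"
proof -
  have "gold * ((sqrt 5 - 1) / 2) = 1"
    unfolding gold_def by (simp add: algebra_simps)
  then have inv_gold: "1 / gold = (sqrt 5 - 1) / 2"
    using gold_pos by (simp add: field_simps)
  show "zsqrt5_val (0,0) / 2 = 0" "zsqrt5_val (2,0) / 2 = 1" "zsqrt5_val (-2,0) / 2 = -1"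
    "zsqrt5_val (1,1) / 2 = gold" "zsqrt5_val (-1,-1) / 2 = -gold"
    "zsqrt5_val (-1,1) / 2 = 1 / gold" "zsqrt5_val (1,-1) / 2 = -1 / gold"
    by (simp_all add: zsqrt5_val_def inv_gold) (simp_all add: gold_def field_simps)
qed

lemma dodec_vertices_eq: "dodec_vertices = vertex ` {..<20}"
proof -
  have sign3: "{f a b d | a b d. a \<in> {-1,1} \<and> b \<in> {-1,1} \<and> d \<in> {-1,1::real}} =
      {f (-1) (-1) (-1), f (-1) (-1) 1, f (-1) 1 (-1), f (-1) 1 1, f 1 (-1) (-1), f 1 (-1) 1,
       f 1 1 (-1), f 1 1 1}" for f :: "real \<Rightarrow> real \<Rightarrow> real \<Rightarrow> real^3"
    by auto
  have sign2: "{f a b | a b. a \<in> {-1,1} \<and> b \<in> {-1,1::real}} = {f (-1) (-1), f (-1) 1, f 1 (-1), f 1 1}"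
    for f :: "real \<Rightarrow> real \<Rightarrow> real^3"
    by auto
  have "dodec_vertices = set (map vec_of_code vertex_codes)"
    unfolding dodec_vertices_def vertex_codes_def sign3 sign2
    by (simp add: vec_of_code_def zsqrt5_val_half_codes divide_minus_left insert_commute)
  also have "\<dots> = vertex ` {..<length vertex_codes}"
  proof -
    have "set vertex_codes = (!) vertex_codes ` {..<length vertex_codes}"
      by (rule set_conv_nth[THEN trans]) (auto simp: image_def)
    then show ?thesis
      by (simp add: image_image vertex_def)
  qed
  also have "length vertex_codes = 20"
    by (simp add: vertex_codes_def)
  finally show ?thesis .
qed

lemma uminus_dodec_vertices: "uminus ` dodec_vertices = dodec_vertices"
proof -
  have "uminus ` dodec_vertices \<subseteq> dodec_vertices"
    unfolding dodec_vertices_eq using vertex_antipode antipode_lt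
    by (auto simp: image_iff) (metis lessThan_iff)
  then show ?thesis
    by (metis equalityI image_subset_iff minus_minus rev_image_eqI subsetI)
qed

lemma neg_in_dodec_vertices_iff: "- v \<in> dodec_vertices \<longleftrightarrow> v \<in> dodec_vertices"
  by (metis uminus_dodec_vertices image_iff minus_minus)

lemma inner_dodec_vertex_self: "v \<in> dodec_vertices \<Longrightarrow> v \<bullet> v = 3"
  unfolding dodec_vertices_eq using inner_vertex_self by auto

lemma dist_dodec_vertices_sq:
  assumes "v \<in> dodec_vertices" "w \<in> dodec_vertices"
  shows "(dist v w)\<^sup>2 = 6 - 2 * (v \<bullet> w)"
  using inner_dodec_vertex_self[OF assms(1)] inner_dodec_vertex_self[OF assms(2)]
  by (simp add: dist_norm power2_norm_eq_inner inner_diff_left inner_diff_right inner_commute)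

lemma dodec_adjacent_iff_inner:
  "dodec_adjacent v w \<longleftrightarrow> v \<in> dodec_vertices \<and> w \<in> dodec_vertices \<and> v \<bullet> w = sqrt 5"
proof -
  have "dist v w = sqrt 5 - 1 \<longleftrightarrow> v \<bullet> w = sqrt 5"
    if "v \<in> dodec_vertices" "w \<in> dodec_vertices"
  proof -
    have "dist v w = sqrt 5 - 1 \<longleftrightarrow> (dist v w)\<^sup>2 = (sqrt 5 - 1)\<^sup>2"
      using sqrt5_bounds by (simp add: power2_eq_iff_nonneg)
    also have "(sqrt 5 - 1)\<^sup>2 = 6 - 2 * sqrt (5::real)"
      by (simp add: power2_eq_square algebra_simps)
    finally show ?thesis
      using dist_dodec_vertices_sq[OF that] by linarith
  qed
  then show ?thesis
    unfolding dodec_adjacent_def by blast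
qed

lemma dodec_adjacent_uminus: "dodec_adjacent (- v) (- w) \<longleftrightarrow> dodec_adjacent v w"
  by (simp add: dodec_adjacent_iff_inner neg_in_dodec_vertices_iff)

definition adjacent_code :: "nat \<Rightarrow> nat \<Rightarrow> bool" where
  "adjacent_code i j \<longleftrightarrow> vertex_inner_code i j = (0, 4)"

lemma dodec_adjacent_vertex_iff:
  assumes "i < 20" "j < 20"
  shows "dodec_adjacent (vertex i) (vertex j) \<longleftrightarrow> adjacent_code i j"
proof -
  have "vertex i \<bullet> vertex j = sqrt 5 \<longleftrightarrow> vertex_inner_code i j = (0, 4)"
    using inner_vertex_eq_iff[OF assms, of "(0, 4)"] by (simp add: zsqrt5_val_def)
  then show ?thesis
    using assms by (auto simp: dodec_adjacent_iff_inner adjacent_code_def dodec_vertices_eq)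
qed

lemma inner_adjacent_vertices:
  "i < 20 \<Longrightarrow> j < 20 \<Longrightarrow> adjacent_code i j \<Longrightarrow> vertex i \<bullet> vertex j = sqrt 5"
  by (simp add: dodec_adjacent_vertex_iff[symmetric] dodec_adjacent_iff_inner)

section \<open>The antipodal symmetry of \<open>\<Sigma>\<close>\<close>

lemma uminus_dodecahedron: "uminus ` dodecahedron = dodecahedron"
  unfolding dodecahedron_def
  by (metis uminus_dodec_vertices convex_hull_linear_image linear_uminus)

lemma closed_dodecahedron: "closed dodecahedron"
  unfolding dodecahedron_def dodec_vertices_eq
  by (simp add: compact_imp_closed finite_imp_compact_convex_hull)

lemma neg_in_frontier_dodecahedron_iff: "- x \<in> frontier dodecahedron \<longleftrightarrow> x \<in> frontier dodecahedron"
proof -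
  have "uminus ` interior dodecahedron = interior dodecahedron"
    by (metis uminus_dodecahedron interior_negations)
  then have "- x \<in> interior dodecahedron \<longleftrightarrow> x \<in> interior dodecahedron"
    by (metis image_iff minus_minus)
  moreover have "- x \<in> dodecahedron \<longleftrightarrow> x \<in> dodecahedron"
    by (metis uminus_dodecahedron image_iff minus_minus)
  ultimately show ?thesis
    using closed_dodecahedron by (simp add: frontier_def closure_closed)
qed

lemma neg_in_Sigma_hat_iff: "- x \<in> Sigma_hat c \<longleftrightarrow> x \<in> Sigma_hat c"
proof -
  have "(\<forall>v\<in>uminus ` dodec_vertices. x \<bullet> v \<le> c) \<longleftrightarrow> (\<forall>v\<in>dodec_vertices. (- x) \<bullet> v \<le> c)"
    by simp
  then have "(\<forall>v\<in>dodec_vertices. (- x) \<bullet> v \<le> c) \<longleftrightarrow> (\<forall>v\<in>dodec_vertices. x \<bullet> v \<le> c)"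
    unfolding uminus_dodec_vertices by simp
  then show ?thesis
    unfolding Sigma_hat_def using neg_in_frontier_dodecahedron_iff by auto
qed

lemma neg_in_Sigma_bdry_iff: "- x \<in> Sigma_bdry c \<longleftrightarrow> x \<in> Sigma_bdry c"
proof -
  have "(\<exists>v\<in>uminus ` dodec_vertices. x \<bullet> v = c) \<longleftrightarrow> (\<exists>v\<in>dodec_vertices. (- x) \<bullet> v = c)"
    by simp
  then have "(\<exists>v\<in>dodec_vertices. (- x) \<bullet> v = c) \<longleftrightarrow> (\<exists>v\<in>dodec_vertices. x \<bullet> v = c)"
    unfolding uminus_dodec_vertices by simp
  then show ?thesis
    unfolding Sigma_bdry_def using neg_in_Sigma_hat_iff by auto
qed

lemma sigma_class_uminus:
  assumes "x \<in> Sigma_hat c \<Longrightarrow> x \<in> Sigma_bdry c"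
  shows "sigma_class c (- x) = sigma_class c x"
  using assms neg_in_Sigma_hat_iff[of x c] neg_in_Sigma_bdry_iff[of x c]
  unfolding sigma_class_def by (cases "x \<in> Sigma_hat c") auto

lemma sigma_class_uminus_on_cap_boundary:
  "v \<in> dodec_vertices \<Longrightarrow> x \<bullet> v = c \<Longrightarrow> sigma_class c (- x) = sigma_class c x"
  by (rule sigma_class_uminus) (auto simp: Sigma_bdry_def)

lemma inner_edge_point_sum:
  assumes "dodec_adjacent v w"
  shows "(v + r *\<^sub>R (w - v)) \<bullet> v + (v + r *\<^sub>R (w - v)) \<bullet> w = 3 + sqrt 5"
proof -
  have "v \<bullet> v = 3" "w \<bullet> w = 3" "v \<bullet> w = sqrt 5" "w \<bullet> v = sqrt 5"
    using assms inner_dodec_vertex_self by (auto simp: dodec_adjacent_iff_inner inner_commute)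
  then show ?thesis
    by (simp add: inner_add_left inner_diff_left algebra_simps)
qed

text \<open>For \<open>c \<le> (3 + \<surd>5)/2\<close> the removed caps at the two ends of an edge meet, so every point of
  the edge left in \<open>\<Sigma>-hat\<close> lies on a cap boundary and is identified with its antipode: the
  cells \<open>y\<close> and \<open>\<iota> y\<close> coincide in \<open>\<Sigma>\<close>.\<close>
lemma delta_eq_0_if_caps_meet:
  assumes "c \<le> (3 + sqrt 5) / 2" "dodec_adjacent v w"
  shows "delta c v w = 0"
proof -
  let ?t = "cut_frac c"
  have on_edge: "sigma_class c (- (v + r *\<^sub>R (w - v))) = sigma_class c (v + r *\<^sub>R (w - v))" for r
  proof (rule sigma_class_uminus)
    let ?x = "v + r *\<^sub>R (w - v)"
    assume "?x \<in> Sigma_hat c"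
    then have "?x \<bullet> v \<le> c" "?x \<bullet> w \<le> c"
      using assms(2) by (auto simp: Sigma_hat_def dodec_adjacent_iff_inner)
    then have "?x \<bullet> v = c"
      using inner_edge_point_sum[OF assms(2), of r] assms(1) by argo
    then show "?x \<in> Sigma_bdry c"
      using \<open>?x \<in> Sigma_hat c\<close> assms(2) by (auto simp: Sigma_bdry_def dodec_adjacent_iff_inner)
  qed
  have "- v + ?t *\<^sub>R (- w - - v) + s *\<^sub>R (- w + ?t *\<^sub>R (- v - - w) - (- v + ?t *\<^sub>R (- w - - v)))
      = - (v + (?t + s * (1 - 2 * ?t)) *\<^sub>R (w - v))"
   and "v + ?t *\<^sub>R (w - v) + s *\<^sub>R (w + ?t *\<^sub>R (v - w) - (v + ?t *\<^sub>R (w - v)))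
      = v + (?t + s * (1 - 2 * ?t)) *\<^sub>R (w - v)" for s
    by (simp_all add: vec_eq_iff algebra_simps)
  then have "edge_cell c (- v) (- w) = edge_cell c v w"
    unfolding edge_cell_def seg_simplex_def by (intro restrict_ext) (simp only: on_edge)
  then show ?thesis
    by (simp add: delta_def)
qed

lemma u_edge_eq_0_if_caps_meet: "c \<le> (3 + sqrt 5) / 2 \<Longrightarrow> u_edge c E = 0"
  unfolding u_edge_def by (simp add: delta_eq_0_if_caps_meet)

lemma delta_uminus: "delta c (- v) (- w) = - delta c v w"
  by (simp add: delta_def)

lemma u_edge_uminus: "u_edge c (uminus ` E) = - u_edge c E"
proof -
  have inj: "inj_on uminus A" for A :: "(real^3) set"
    by (auto intro: inj_onI)
  have nbrs: "Collect (dodec_adjacent (- y)) = uminus ` Collect (dodec_adjacent y)" for y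
    using dodec_adjacent_uminus[of y] by (force simp: image_iff intro: exI[of _ "- w" for w])
  have "u_edge c (uminus ` E) = (\<Sum>y\<in>E. \<Sum>u\<in>{u. dodec_adjacent y u}. delta c (- y) (- u))"
    unfolding u_edge_def by (simp add: sum.reindex[OF inj] nbrs)
  also have "\<dots> = - u_edge c E"
    unfolding u_edge_def delta_uminus by (simp add: sum_negf)
  finally show ?thesis .
qed

section \<open>Faces, caps and corners\<close>

lemma convex_hull_subset_frontier_if_supporting:
  fixes V F :: "'a::euclidean_space set"
  assumes "finite V" "F \<subseteq> V" "n \<noteq> 0"
    and "\<And>v. v \<in> F \<Longrightarrow> n \<bullet> v = h" "\<And>u. u \<in> V \<Longrightarrow> n \<bullet> u \<le> h"
  shows "convex hull F \<subseteq> frontier (convex hull V)"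
proof
  fix x assume x: "x \<in> convex hull F"
  have "convex hull F \<subseteq> {y. n \<bullet> y = h}"
    by (rule hull_minimal) (use assms(4) convex_hyperplane in auto)
  then have nx: "n \<bullet> x = h"
    using x by auto
  have hull_V: "convex hull V \<subseteq> {y. n \<bullet> y \<le> h}"
    by (rule hull_minimal) (use assms(5) convex_halfspace_le in auto)
  have "x \<notin> interior (convex hull V)"
  proof
    assume "x \<in> interior (convex hull V)"
    then obtain e where e: "e > 0" "ball x e \<subseteq> convex hull V"
      using mem_interior by blast
    let ?y = "x + (e / 2 / norm n) *\<^sub>R n"
    have "?y \<in> convex hull V"
      using e assms(3) by (auto simp: dist_norm)
    then have "n \<bullet> ?y \<le> h"
      using hull_V by auto
    moreover have "n \<bullet> ?y = n \<bullet> x + e / 2 * norm n"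
      using assms(3) by (simp add: inner_add_right power2_norm_eq_inner[symmetric] power2_eq_square)
    ultimately show False
      using nx e assms(3) by (smt (verit) divide_pos_pos mult_pos_pos zero_less_norm_iff)
  qed
  moreover have "x \<in> convex hull V"
    using x assms(2) hull_mono by blast
  ultimately show "x \<in> frontier (convex hull V)"
    using assms(1) by (simp add: frontier_def closure_closed compact_imp_closed finite_imp_compact_convex_hull)
qed

text \<open>The twelve pentagonal faces, each listed cyclically by vertex indices.\<close>
definition face_codes :: "nat list list" where
  "face_codes = [[14, 8, 0, 10, 2], [19, 16, 6, 18, 7], [17, 11, 5, 19, 7], [5, 11, 1, 9, 15],
    [3, 12, 2, 10, 13], [13, 10, 0, 9, 1], [15, 9, 0, 8, 4], [18, 12, 3, 17, 7], [5, 15, 4, 16, 19],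
    [6, 16, 4, 8, 14], [3, 13, 1, 11, 17], [6, 14, 2, 12, 18]]"

definition face_inner_code :: "nat list \<Rightarrow> nat \<Rightarrow> zsqrt5" where
  "face_inner_code f u = foldr (\<lambda>v acc. zsqrt5_add (vertex_inner_code v u) acc) f (0, 0)"

lemma inner_face_sum_vertex: "sum_list (map vertex f) \<bullet> vertex u = zsqrt5_val (face_inner_code f u) / 4"
  by (induction f)
     (simp add: face_inner_code_def zsqrt5_val_def,
      simp add: face_inner_code_def inner_add_left inner_vertex_code zsqrt5_val_add add_divide_distrib)

text \<open>The sum \<open>n\<close> of the vertices of \<open>f\<close> is a supporting normal: \<open>n \<bullet> v\<close> is the same value
  \<open>h \<ge> 1/4\<close> at all vertices of \<open>f\<close> and at most \<open>h\<close> at all vertices of \<open>D\<close>.\<close>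
definition face_code_ok :: "nat list \<Rightarrow> bool" where
  "face_code_ok f \<longleftrightarrow> list_all (\<lambda>v. v < 20) f \<and>
     zsqrt5_nonneg (zsqrt5_diff (face_inner_code f (f ! 0)) (1, 0)) \<and>
     list_all (\<lambda>v. face_inner_code f v = face_inner_code f (f ! 0)) f \<and>
     list_all (\<lambda>u. zsqrt5_nonneg (zsqrt5_diff (face_inner_code f (f ! 0)) (face_inner_code f u))) [0..<20]"

lemma face_codes_ok: "list_all face_code_ok face_codes"
  unfolding face_codes_def face_code_ok_def by code_simp

lemma face_subset_frontier_dodecahedron:
  assumes "f \<in> set face_codes"
  shows "convex hull (vertex ` set f) \<subseteq> frontier dodecahedron"
proof -
  have ok: "face_code_ok f"
    using face_codes_ok assms by (simp add: list_all_iff)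
  let ?n = "sum_list (map vertex f)" and ?h = "zsqrt5_val (face_inner_code f (f ! 0)) / 4"
  have "zsqrt5_nonneg (zsqrt5_diff (face_inner_code f (f ! 0)) (1, 0))"
    using ok by (simp add: face_code_ok_def)
  then have "0 \<le> zsqrt5_val (zsqrt5_diff (face_inner_code f (f ! 0)) (1, 0))"
    by (rule zsqrt5_nonneg_val)
  then have "1 \<le> zsqrt5_val (face_inner_code f (f ! 0))"
    by (simp only: zsqrt5_val_diff) (simp add: zsqrt5_val_def)
  then have "?n \<bullet> vertex (f ! 0) \<noteq> 0"
    by (simp add: inner_face_sum_vertex)
  then have "?n \<noteq> 0"
    by auto
  show ?thesis
    unfolding dodecahedron_def
  proof (rule convex_hull_subset_frontier_if_supporting[where n = ?n and h = ?h])
    show "?n \<noteq> 0"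
      by fact
    show "finite dodec_vertices"
      by (simp add: dodec_vertices_eq)
    show "vertex ` set f \<subseteq> dodec_vertices"
      using ok by (auto simp: dodec_vertices_eq face_code_ok_def list_all_iff)
    show "?n \<bullet> v = ?h" if "v \<in> vertex ` set f" for v
      using ok that by (auto simp: inner_face_sum_vertex face_code_ok_def list_all_iff)
    show "?n \<bullet> u \<le> ?h" if u: "u \<in> dodec_vertices" for u
    proof -
      obtain k where k: "k < 20" "u = vertex k"
        using u by (auto simp: dodec_vertices_eq)
      then have "zsqrt5_nonneg (zsqrt5_diff (face_inner_code f (f ! 0)) (face_inner_code f k))"
        using ok by (auto simp: face_code_ok_def list_all_iff)
      then have "0 \<le> zsqrt5_val (face_inner_code f (f ! 0)) - zsqrt5_val (face_inner_code f k)"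
        using zsqrt5_nonneg_val zsqrt5_val_diff by metis
      then show ?thesis
        using k by (simp add: inner_face_sum_vertex divide_right_mono)
    qed
  qed
qed

definition small_caps :: "real \<Rightarrow> bool" where
  "small_caps c \<longleftrightarrow> (3 + sqrt 5) / 2 < c \<and> c < 3"

lemma cut_frac_mult: "cut_frac c * (3 - sqrt 5) = 3 - c"
  using sqrt5_bounds by (simp add: cut_frac_def)

lemma cut_frac_bounds:
  assumes "small_caps c"
  shows "0 < cut_frac c" "cut_frac c < 1 / 2"
  using assms sqrt5_bounds by (auto simp: small_caps_def cut_frac_def field_simps)

type_synonym corner = "nat \<times> nat"

text \<open>The corner \<open>(i, j)\<close> is the point where the edge from vertex \<open>i\<close> to vertex \<open>j\<close> leaves the
  cap removed around vertex \<open>i\<close>; the corners are the vertices of the polygons of \<open>\<Sigma>-hat\<close>.\<close>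
definition cut_point :: "real \<Rightarrow> corner \<Rightarrow> real^3" where
  "cut_point c a = vertex (fst a) + cut_frac c *\<^sub>R (vertex (snd a) - vertex (fst a))"

lemma inner_cut_point_own_vertex:
  assumes "i < 20" "j < 20" "adjacent_code i j"
  shows "cut_point c (i, j) \<bullet> vertex i = c"
  using inner_vertex_self[OF assms(1)] inner_adjacent_vertices[OF assms] cut_frac_mult[of c]
  by (simp add: cut_point_def inner_add_left inner_diff_left inner_commute algebra_simps)

lemma inner_cut_point_le:
  assumes "small_caps c" "i < 20" "j < 20" "adjacent_code i j" "k < 20"
  shows "cut_point c (i, j) \<bullet> vertex k \<le> c"
proof -
  let ?t = "cut_frac c"
  have t: "0 < ?t" "?t < 1 / 2"
    using cut_frac_bounds[OF assms(1)] by auto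
  have ij: "vertex i \<bullet> vertex j = sqrt 5"
    using inner_adjacent_vertices[OF assms(2-4)] .
  have eq: "cut_point c (i, j) \<bullet> vertex k = (1 - ?t) * (vertex i \<bullet> vertex k) + ?t * (vertex j \<bullet> vertex k)"
    by (simp add: cut_point_def inner_add_left inner_diff_left algebra_simps)
  consider "k = i" | "k = j" | "k \<noteq> i" "k \<noteq> j"
    by blast
  then show ?thesis
  proof cases
    case 1
    then show ?thesis
      using inner_cut_point_own_vertex[OF assms(2-4)] by simp
  next
    case 2
    then show ?thesis
      using eq ij inner_vertex_self[OF assms(3)] cut_frac_mult[of c] assms(1)
      by (simp add: small_caps_def algebra_simps)
  next
    case 3
    then have "vertex i \<bullet> vertex k \<le> sqrt 5" "vertex j \<bullet> vertex k \<le> sqrt 5"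
      using inner_vertex_le_sqrt5 assms by auto
    then have "cut_point c (i, j) \<bullet> vertex k \<le> (1 - ?t) * sqrt 5 + ?t * sqrt 5"
      unfolding eq using t by (intro add_mono mult_left_mono) auto
    then show ?thesis
      using assms(1) by (simp add: small_caps_def algebra_simps)
  qed
qed

definition face_piece :: "real \<Rightarrow> nat list \<Rightarrow> (real^3) set" where
  "face_piece c f = convex hull (vertex ` set f) \<inter> {x. \<forall>u\<in>dodec_vertices. x \<bullet> u \<le> c}"

lemma convex_face_piece: "convex (face_piece c f)"
proof -
  have "{x. x \<bullet> u \<le> c} = {x. u \<bullet> x \<le> c}" for u :: "real^3"
    by (simp add: inner_commute)
  then have "convex {x::real^3. \<forall>u\<in>dodec_vertices. x \<bullet> u \<le> c}"
    by (simp add: Collect_ball_eq convex_INT convex_halfspace_le)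
  then show ?thesis
    unfolding face_piece_def by (intro convex_Int convex_convex_hull)
qed

lemma face_piece_subset_Sigma_hat: "f \<in> set face_codes \<Longrightarrow> face_piece c f \<subseteq> Sigma_hat c"
  using face_subset_frontier_dodecahedron unfolding face_piece_def Sigma_hat_def by auto

lemma cut_point_in_face_piece:
  assumes "small_caps c" "i \<in> set f" "j \<in> set f" "i < 20" "j < 20" "adjacent_code i j"
  shows "cut_point c (i, j) \<in> face_piece c f"
proof -
  let ?t = "cut_frac c"
  have "cut_point c (i, j) = (1 - ?t) *\<^sub>R vertex i + ?t *\<^sub>R vertex j"
    by (simp add: cut_point_def algebra_simps)
  moreover have "vertex i \<in> convex hull (vertex ` set f)" "vertex j \<in> convex hull (vertex ` set f)"
    using assms(2,3) by (auto intro: hull_inc)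
  ultimately have "cut_point c (i, j) \<in> convex hull (vertex ` set f)"
    using cut_frac_bounds[OF assms(1)] by (simp add: convexD convex_convex_hull)
  moreover have "\<forall>u\<in>dodec_vertices. cut_point c (i, j) \<bullet> u \<le> c"
    using inner_cut_point_le[OF assms(1,4,5,6)] by (auto simp: dodec_vertices_eq)
  ultimately show ?thesis
    by (simp add: face_piece_def)
qed

section \<open>The quotient topology\<close>

lemma istopology_quotient:
  "istopology (\<lambda>U. U \<subseteq> q ` topspace X \<and> openin X {x \<in> topspace X. q x \<in> U})"
proof -
  have "{x \<in> topspace X. q x \<in> S \<inter> T} = {x \<in> topspace X. q x \<in> S} \<inter> {x \<in> topspace X. q x \<in> T}"
    and "{x \<in> topspace X. q x \<in> \<Union>K} = (\<Union>S\<in>K. {x \<in> topspace X. q x \<in> S})" for S T K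
    by auto
  then show ?thesis
    unfolding istopology_def by (auto intro!: openin_Int openin_Union)
qed

lemma openin_quotient_top:
  "openin (quotient_top X q) U \<longleftrightarrow> U \<subseteq> q ` topspace X \<and> openin X {x \<in> topspace X. q x \<in> U}"
  unfolding quotient_top_def by (simp add: istopology_quotient)

lemma topspace_quotient_top: "topspace (quotient_top X q) = q ` topspace X"
proof (rule antisym)
  show "topspace (quotient_top X q) \<subseteq> q ` topspace X"
    using openin_quotient_top[of X q "topspace (quotient_top X q)"] by simp
  have "{x \<in> topspace X. q x \<in> q ` topspace X} = topspace X"
    by auto
  then have "openin (quotient_top X q) (q ` topspace X)"
    by (simp add: openin_quotient_top)
  then show "q ` topspace X \<subseteq> topspace (quotient_top X q)"
    by (rule openin_subset)
qed

lemma continuous_map_quotient_top: "continuous_map X (quotient_top X q) q"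
  by (auto simp: continuous_map topspace_quotient_top openin_quotient_top)

section \<open>Affine simplices in \<open>\<Sigma>\<close>\<close>

lemma singular_simplex_sigma_class:
  assumes "continuous_map (subtopology (powertop_real UNIV) (standard_simplex p)) euclidean f"
    and "\<And>t. t \<in> standard_simplex p \<Longrightarrow> f t \<in> Sigma_hat c"
  shows "singular_simplex p (Sigma_top c) (restrict (sigma_class c \<circ> f) (standard_simplex p))"
proof -
  have "continuous_map (subtopology (powertop_real UNIV) (standard_simplex p)) (top_of_set (Sigma_hat c)) f"
    using assms by (auto simp: continuous_map_in_subtopology)
  then have "continuous_map (subtopology (powertop_real UNIV) (standard_simplex p)) (Sigma_top c)
      (sigma_class c \<circ> f)"
    unfolding Sigma_top_def using continuous_map_quotient_top continuous_map_compose by blast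
  then show ?thesis
    unfolding singular_simplex_def by (auto intro: continuous_map_eq)
qed

lemma continuous_map_add_coordinate_scaleR:
  assumes "continuous_map (subtopology (powertop_real UNIV) S) euclidean f"
  shows "continuous_map (subtopology (powertop_real UNIV) S) euclidean
    (\<lambda>t. f t + t k *\<^sub>R (b :: 'a::real_normed_vector))"
proof -
  have "continuous_map (subtopology (powertop_real UNIV) S) euclideanreal (\<lambda>t. t k)"
    by (rule continuous_map_from_subtopology) (auto intro: continuous_map_product_projection)
  then show ?thesis
    using assms by (intro continuous_map_add) (auto simp: continuous_map_atin tendsto_scaleR)
qed

lemma standard_simplex_1_coordinates:
  assumes "s \<in> standard_simplex 1"
  shows "s 0 = 1 - s 1" "0 \<le> s 0" "0 \<le> s 1"
  using assms by (auto simp: standard_simplex_def)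

lemma standard_simplex_2_coordinates:
  assumes "s \<in> standard_simplex 2"
  shows "s 0 = 1 - s 1 - s 2" "0 \<le> s 0" "0 \<le> s 1" "0 \<le> s 2"
proof -
  have "(\<Sum>i\<le>2. s i) = s 0 + s 1 + s 2"
    by (simp add: numeral_2_eq_2)
  then show "s 0 = 1 - s 1 - s 2"
    using assms by (simp add: standard_simplex_def)
qed (use assms in \<open>auto simp: standard_simplex_def\<close>)

lemma singular_simplex_seg_simplex:
  assumes "convex K" "K \<subseteq> Sigma_hat c" "P \<in> K" "Q \<in> K"
  shows "singular_simplex 1 (Sigma_top c) (seg_simplex c P Q)"
proof -
  have "singular_simplex 1 (Sigma_top c)
      (restrict (sigma_class c \<circ> (\<lambda>s. P + s 1 *\<^sub>R (Q - P))) (standard_simplex 1))"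
  proof (rule singular_simplex_sigma_class)
    show "continuous_map (subtopology (powertop_real UNIV) (standard_simplex 1)) euclidean
        (\<lambda>s. P + s 1 *\<^sub>R (Q - P))"
      by (intro continuous_map_add_coordinate_scaleR continuous_map_const[THEN iffD2]) auto
    fix s assume s: "s \<in> standard_simplex 1"
    have "P + s 1 *\<^sub>R (Q - P) = s 0 *\<^sub>R P + s 1 *\<^sub>R Q"
      by (simp add: standard_simplex_1_coordinates(1)[OF s] algebra_simps)
    then show "P + s 1 *\<^sub>R (Q - P) \<in> Sigma_hat c"
      using convexD[OF assms(1,3,4)] standard_simplex_1_coordinates[OF s] assms(2) by auto
  qed
  then show ?thesis
    by (simp add: seg_simplex_def o_def)
qed

definition tri_simplex :: "real \<Rightarrow> real^3 \<Rightarrow> real^3 \<Rightarrow> real^3 \<Rightarrow> (nat \<Rightarrow> real) \<Rightarrow> (real^3) set" where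
  "tri_simplex c A B D =
     restrict (\<lambda>s. sigma_class c (A + s 1 *\<^sub>R (B - A) + s 2 *\<^sub>R (D - A))) (standard_simplex 2)"

lemma singular_simplex_tri_simplex:
  assumes "convex K" "K \<subseteq> Sigma_hat c" "A \<in> K" "B \<in> K" "D \<in> K"
  shows "singular_simplex 2 (Sigma_top c) (tri_simplex c A B D)"
proof -
  have "singular_simplex 2 (Sigma_top c)
      (restrict (sigma_class c \<circ> (\<lambda>s. A + s 1 *\<^sub>R (B - A) + s 2 *\<^sub>R (D - A))) (standard_simplex 2))"
  proof (rule singular_simplex_sigma_class)
    show "continuous_map (subtopology (powertop_real UNIV) (standard_simplex 2)) euclidean
        (\<lambda>s. A + s 1 *\<^sub>R (B - A) + s 2 *\<^sub>R (D - A))"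
      by (intro continuous_map_add_coordinate_scaleR continuous_map_const[THEN iffD2]) auto
    fix s assume s: "s \<in> standard_simplex 2"
    have "A + s 1 *\<^sub>R (B - A) + s 2 *\<^sub>R (D - A) = s 0 *\<^sub>R A + s 1 *\<^sub>R B + s 2 *\<^sub>R D"
      by (simp add: standard_simplex_2_coordinates(1)[OF s] algebra_simps)
    moreover have "s 0 *\<^sub>R A + s 1 *\<^sub>R B + s 2 *\<^sub>R D \<in> convex hull {A, B, D}"
      unfolding convex_hull_3 using standard_simplex_2_coordinates[OF s] by force
    moreover have "convex hull {A, B, D} \<subseteq> K"
      using assms by (simp add: hull_minimal)
    ultimately show "A + s 1 *\<^sub>R (B - A) + s 2 *\<^sub>R (D - A) \<in> Sigma_hat c"
      using assms(2) by auto
  qed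
  then show ?thesis
    by (simp add: tri_simplex_def o_def)
qed

lemma singular_face_tri_simplex:
  "singular_face 2 0 (tri_simplex c A B D) = seg_simplex c B D"
  "singular_face 2 1 (tri_simplex c A B D) = seg_simplex c A D"
  "singular_face 2 2 (tri_simplex c A B D) = seg_simplex c A B"
proof -
  have face: "simplical_face k s \<in> standard_simplex 2" if "s \<in> standard_simplex 1" "k \<le> 2" for k s
    using simplical_face_in_standard_simplex[of 2 k s] that by simp
  have dim: "(2::nat) - Suc 0 = 1"
    by simp
  show "singular_face 2 0 (tri_simplex c A B D) = seg_simplex c B D"
    unfolding singular_face_def seg_simplex_def dim
  proof (rule restrict_ext)
    fix s assume s: "s \<in> standard_simplex 1"
    have "A + s 0 *\<^sub>R (B - A) + s 1 *\<^sub>R (D - A) = B + s 1 *\<^sub>R (D - B)"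
      by (simp add: standard_simplex_1_coordinates(1)[OF s] algebra_simps)
    then show "(tri_simplex c A B D \<circ> simplical_face 0) s = sigma_class c (B + s 1 *\<^sub>R (D - B))"
      using face[OF s, of 0] by (simp add: tri_simplex_def simplical_face_def)
  qed
  show "singular_face 2 1 (tri_simplex c A B D) = seg_simplex c A D"
    unfolding singular_face_def seg_simplex_def dim
  proof (rule restrict_ext)
    fix s assume s: "s \<in> standard_simplex 1"
    show "(tri_simplex c A B D \<circ> simplical_face 1) s = sigma_class c (A + s 1 *\<^sub>R (D - A))"
      using face[OF s, of 1] by (simp add: tri_simplex_def simplical_face_def)
  qed
  show "singular_face 2 2 (tri_simplex c A B D) = seg_simplex c A B"
    unfolding singular_face_def seg_simplex_def dim
  proof (rule restrict_ext)
    fix s assume s: "s \<in> standard_simplex 1"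
    show "(tri_simplex c A B D \<circ> simplical_face 2) s = sigma_class c (A + s 1 *\<^sub>R (B - A))"
      using face[OF s, of 2] by (simp add: tri_simplex_def simplical_face_def)
  qed
qed

lemma chain_boundary_tri_simplex:
  "chain_boundary 2 (frag_of (tri_simplex c A B D)) =
     frag_of (seg_simplex c B D) - frag_of (seg_simplex c A D) + frag_of (seg_simplex c A B)"
proof -
  have "{..2::nat} = {0, 1, 2}"
    by auto
  then show ?thesis
    by (simp add: chain_boundary_of singular_face_tri_simplex[unfolded One_nat_def])
qed

definition point_simplex :: "real \<Rightarrow> real^3 \<Rightarrow> (nat \<Rightarrow> real) \<Rightarrow> (real^3) set" where
  "point_simplex c X = restrict (\<lambda>_. sigma_class c X) (standard_simplex 0)"

lemma chain_boundary_seg_simplex: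
  "chain_boundary 1 (frag_of (seg_simplex c P Q)) = frag_of (point_simplex c Q) - frag_of (point_simplex c P)"
proof -
  have face: "simplical_face k s \<in> standard_simplex 1" "s 0 = 1"
    if "s \<in> standard_simplex 0" "k \<le> 1" for k s
    using simplical_face_in_standard_simplex[of 1 k s] that by (auto simp: standard_simplex_0)
  have dim: "(1::nat) - Suc 0 = 0"
    by simp
  have "singular_face 1 k (seg_simplex c P Q) = point_simplex c (if k = 0 then Q else P)"
    if k: "k \<le> 1" for k
    unfolding singular_face_def point_simplex_def dim
  proof (rule restrict_ext)
    fix s assume s: "s \<in> standard_simplex 0"
    show "(seg_simplex c P Q \<circ> simplical_face k) s = sigma_class c (if k = 0 then Q else P)"
      using face[OF s k] k by (auto simp: seg_simplex_def simplical_face_def)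
  qed
  moreover have "{..1::nat} = {0, 1}"
    by auto
  ultimately show ?thesis
    by (simp add: chain_boundary_of)
qed

section \<open>Chains of oriented segments between corners\<close>

definition corner_seg :: "real \<Rightarrow> corner \<Rightarrow> corner \<Rightarrow> (nat \<Rightarrow> real) \<Rightarrow> (real^3) set" where
  "corner_seg c a b = seg_simplex c (cut_point c a) (cut_point c b)"

definition corner_tri :: "real \<Rightarrow> corner \<Rightarrow> corner \<Rightarrow> corner \<Rightarrow> (nat \<Rightarrow> real) \<Rightarrow> (real^3) set" where
  "corner_tri c a b d = tri_simplex c (cut_point c a) (cut_point c b) (cut_point c d)"

lemma chain_boundary_corner_tri:
  "chain_boundary 2 (frag_of (corner_tri c a b d)) =
     frag_of (corner_seg c b d) - frag_of (corner_seg c a d) + frag_of (corner_seg c a b)"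
  by (simp add: corner_tri_def corner_seg_def chain_boundary_tri_simplex)

text \<open>Simplices are stored with their vertices in increasing order of \<open>key\<close>, so that reversing
  an oriented segment negates it on the nose.\<close>
definition oriented_seg :: "(corner \<Rightarrow> int) \<Rightarrow> real \<Rightarrow> corner \<Rightarrow> corner \<Rightarrow> (real^3) set chain" where
  "oriented_seg key c a b =
     (if key a < key b then frag_of (corner_seg c a b) else - frag_of (corner_seg c b a))"

lemma oriented_seg_swap: "key a \<noteq> key b \<Longrightarrow> oriented_seg key c b a = - oriented_seg key c a b"
  by (auto simp: oriented_seg_def)

definition oriented_tri :: "(corner \<Rightarrow> int) \<Rightarrow> real \<Rightarrow> corner \<Rightarrow> corner \<Rightarrow> corner \<Rightarrow> (real^3) set chain" where
  "oriented_tri key c a b d =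
     (if key a < key b \<and> key b < key d then frag_of (corner_tri c a b d)
      else if key a < key d \<and> key d < key b then - frag_of (corner_tri c a d b)
      else if key b < key a \<and> key a < key d then - frag_of (corner_tri c b a d)
      else if key b < key d \<and> key d < key a then frag_of (corner_tri c b d a)
      else if key d < key a \<and> key a < key b then frag_of (corner_tri c d a b)
      else - frag_of (corner_tri c d b a))"

lemma chain_boundary_oriented_tri:
  assumes "key a \<noteq> key b" "key b \<noteq> key d" "key a \<noteq> key d"
  shows "chain_boundary 2 (oriented_tri key c a b d) =
           oriented_seg key c a b + oriented_seg key c b d + oriented_seg key c d a"
proof -
  consider "key a < key b" "key b < key d" | "key a < key d" "key d < key b"
    | "key b < key a" "key a < key d" | "key b < key d" "key d < key a"
    | "key d < key a" "key a < key b" | "key d < key b" "key b < key a"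
    using assms by linarith
  then show ?thesis
    by cases (simp_all add: oriented_tri_def oriented_seg_def chain_boundary_corner_tri
                chain_boundary_minus algebra_simps)
qed

text \<open>A term \<open>(k, (a, b))\<close> stands for \<open>k\<close> times the oriented segment from \<open>a\<close> to \<open>b\<close>.\<close>
type_synonym seg_term = "int \<times> (corner \<times> corner)"

definition terms_chain :: "(corner \<Rightarrow> int) \<Rightarrow> real \<Rightarrow> seg_term list \<Rightarrow> (real^3) set chain" where
  "terms_chain key c ts = (\<Sum>t\<leftarrow>ts. frag_cmul (fst t) (oriented_seg key c (fst (snd t)) (snd (snd t))))"

lemma terms_chain_simps [simp]:
  "terms_chain key c [] = 0"
  "terms_chain key c (t # ts) =
     frag_cmul (fst t) (oriented_seg key c (fst (snd t)) (snd (snd t))) + terms_chain key c ts"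
  "terms_chain key c (ts @ us) = terms_chain key c ts + terms_chain key c us"
  by (simp_all add: terms_chain_def)

lemma terms_chain_concat: "terms_chain key c (concat (map f xs)) = (\<Sum>x\<leftarrow>xs. terms_chain key c (f x))"
  by (induction xs) simp_all

lemma terms_chain_scale:
  "terms_chain key c (map (\<lambda>t. (k * fst t, snd t)) ts) = frag_cmul k (terms_chain key c ts)"
  by (induction ts) (simp_all add: frag_cmul_distrib2)

fun path_terms :: "corner list \<Rightarrow> seg_term list" where
  "path_terms (a # b # cs) = (1, (a, b)) # path_terms (b # cs)"
| "path_terms _ = []"

lemma path_terms_snoc: "cs \<noteq> [] \<Longrightarrow> path_terms (cs @ [b]) = path_terms cs @ [(1, (last cs, b))]"
  by (induction cs rule: path_terms.induct) auto

fun fan_chain :: "(corner \<Rightarrow> int) \<Rightarrow> real \<Rightarrow> corner \<Rightarrow> corner list \<Rightarrow> (real^3) set chain" where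
  "fan_chain key c x (a # b # cs) = oriented_tri key c x a b + fan_chain key c x (b # cs)"
| "fan_chain key c x _ = 0"

lemma chain_boundary_fan_chain:
  assumes "distinct (map key (x # a # cs))"
  shows "chain_boundary 2 (fan_chain key c x (a # cs)) =
           oriented_seg key c x a + terms_chain key c (path_terms (a # cs)) + oriented_seg key c (last (a # cs)) x"
  using assms
proof (induction cs arbitrary: a)
  case Nil
  then show ?case
    using oriented_seg_swap[of key x a c] by simp
next
  case (Cons b cs)
  have keys: "key x \<noteq> key a" "key a \<noteq> key b" "key x \<noteq> key b"
    using Cons.prems by auto
  have "chain_boundary 2 (fan_chain key c x (a # b # cs)) =
      chain_boundary 2 (oriented_tri key c x a b) + chain_boundary 2 (fan_chain key c x (b # cs))"
    by (simp add: chain_boundary_add)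
  also have "\<dots> = oriented_seg key c x a + oriented_seg key c a b + oriented_seg key c b x
      + (oriented_seg key c x b + terms_chain key c (path_terms (b # cs)) + oriented_seg key c (last (b # cs)) x)"
    using Cons by (simp add: chain_boundary_oriented_tri[OF keys])
  also have "\<dots> = oriented_seg key c x a + terms_chain key c (path_terms (a # b # cs))
      + oriented_seg key c (last (a # b # cs)) x"
    using oriented_seg_swap[OF keys(3), of c] by (simp add: algebra_simps)
  finally show ?case .
qed

definition polygon_chain :: "(corner \<Rightarrow> int) \<Rightarrow> real \<Rightarrow> corner list \<Rightarrow> (real^3) set chain" where
  "polygon_chain key c cs = fan_chain key c (hd cs) (tl cs)"

lemma chain_boundary_polygon_chain:
  assumes "distinct (map key cs)" "2 \<le> length cs"
  shows "chain_boundary 2 (polygon_chain key c cs) = terms_chain key c (path_terms (cs @ [hd cs]))"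
proof -
  obtain x a as where cs: "cs = x # a # as"
    using assms(2) by (metis Suc_le_length_iff numeral_2_eq_2)
  have "path_terms (cs @ [hd cs]) = (1, (x, a)) # path_terms (a # as) @ [(1, (last (a # as), x))]"
    using path_terms_snoc[of "a # as" x] cs by simp
  then show ?thesis
    using chain_boundary_fan_chain[of key x a as c] assms(1) cs
    by (simp add: polygon_chain_def add.assoc del: path_terms.simps)
qed

definition term_coeff :: "(int \<times> 'p) list \<Rightarrow> 'p \<Rightarrow> int" where
  "term_coeff ts p = sum_list (map fst (filter (\<lambda>t. snd t = p) ts))"

lemma sum_list_frag_cmul_eq_sum_term_coeff:
  fixes g :: "'p \<Rightarrow> 'a chain"
  assumes "finite S" "snd ` set ts \<subseteq> S"
  shows "(\<Sum>t\<leftarrow>ts. frag_cmul (fst t) (g (snd t))) = (\<Sum>p\<in>S. frag_cmul (term_coeff ts p) (g p))"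
  using assms(2)
proof (induction ts)
  case Nil
  then show ?case
    by (simp add: term_coeff_def)
next
  case (Cons t ts)
  have coeff: "term_coeff (t # ts) p = (if snd t = p then fst t else 0) + term_coeff ts p" for p
    by (simp add: term_coeff_def)
  have "(\<Sum>p\<in>S. frag_cmul (if snd t = p then fst t else 0) (g p))
      = (\<Sum>p\<in>S. if snd t = p then frag_cmul (fst t) (g (snd t)) else 0)"
    by (rule sum.cong) auto
  also have "\<dots> = frag_cmul (fst t) (g (snd t))"
    using Cons.prems assms(1) by (simp add: sum.delta)
  finally show ?case
    using Cons by (simp add: coeff frag_cmul_distrib sum.distrib)
qed

lemma terms_chain_eq_if_term_coeff_eq:
  assumes "list_all (\<lambda>p. term_coeff ts p = term_coeff us p) (map snd (ts @ us))"
  shows "terms_chain key c ts = terms_chain key c us"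
proof -
  let ?S = "snd ` set (ts @ us)" and ?g = "\<lambda>p. oriented_seg key c (fst p) (snd p)"
  have "terms_chain key c ts = (\<Sum>p\<in>?S. frag_cmul (term_coeff ts p) (?g p))"
    unfolding terms_chain_def by (rule sum_list_frag_cmul_eq_sum_term_coeff) auto
  also have "\<dots> = (\<Sum>p\<in>?S. frag_cmul (term_coeff us p) (?g p))"
    using assms by (intro sum.cong refl) (simp add: list_all_iff image_Un)
  also have "\<dots> = terms_chain key c us"
    unfolding terms_chain_def by (rule sum_list_frag_cmul_eq_sum_term_coeff[symmetric]) auto
  finally show ?thesis .
qed

lemma seg_simplex_uminus_on_cap_boundary:
  assumes "v \<in> dodec_vertices" "P \<bullet> v = c" "Q \<bullet> v = c"
  shows "seg_simplex c (- P) (- Q) = seg_simplex c P Q"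
  unfolding seg_simplex_def
proof (rule restrict_ext)
  fix s :: "nat \<Rightarrow> real"
  have "sigma_class c (- (P + s 1 *\<^sub>R (Q - P))) = sigma_class c (P + s 1 *\<^sub>R (Q - P))"
    by (rule sigma_class_uminus_on_cap_boundary[OF assms(1)]) (simp add: assms inner_add_left inner_diff_left)
  moreover have "- P + s 1 *\<^sub>R (- Q - - P) = - (P + s 1 *\<^sub>R (Q - P))"
    by (simp add: algebra_simps)
  ultimately show "sigma_class c (- P + s 1 *\<^sub>R (- Q - - P)) = sigma_class c (P + s 1 *\<^sub>R (Q - P))"
    by (simp only:)
qed

definition antipodal_corner :: "corner \<Rightarrow> corner" where
  "antipodal_corner a = (antipode (fst a), antipode (snd a))"

lemma cut_point_antipodal_corner:
  "fst a < 20 \<Longrightarrow> snd a < 20 \<Longrightarrow> cut_point c (antipodal_corner a) = - cut_point c a"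
  by (simp add: cut_point_def antipodal_corner_def vertex_antipode algebra_simps)

text \<open>A segment between two corners at the same vertex runs along a cap boundary, where
  \<open>\<Sigma>\<close> identifies it with its antipodal segment.\<close>
lemma corner_seg_antipodal_arc:
  assumes "fst b = fst a" "fst a < 20" "snd a < 20" "snd b < 20"
    and "adjacent_code (fst a) (snd a)" "adjacent_code (fst a) (snd b)"
  shows "corner_seg c (antipodal_corner a) (antipodal_corner b) = corner_seg c a b"
proof -
  have "cut_point c a \<bullet> vertex (fst a) = c" "cut_point c b \<bullet> vertex (fst a) = c"
    using inner_cut_point_own_vertex[of "fst a" "snd a" c] inner_cut_point_own_vertex[of "fst a" "snd b" c]
      assms by (metis prod.collapse)+
  moreover have "vertex (fst a) \<in> dodec_vertices"
    using assms by (simp add: dodec_vertices_eq)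
  ultimately show ?thesis
    using assms by (simp add: corner_seg_def cut_point_antipodal_corner seg_simplex_uminus_on_cap_boundary)
qed

definition cap_arc_ok :: "(corner \<Rightarrow> int) \<Rightarrow> corner \<Rightarrow> corner \<Rightarrow> bool" where
  "cap_arc_ok key a b \<longleftrightarrow> fst a < 20 \<and> snd a < 20 \<and> snd b < 20 \<and>
     adjacent_code (fst a) (snd a) \<and> adjacent_code (fst a) (snd b) \<and>
     key (antipodal_corner a) \<noteq> key (antipodal_corner b) \<and>
     (key a < key b \<longleftrightarrow> key (antipodal_corner a) < key (antipodal_corner b))"

lemma oriented_seg_antipodal_arc:
  assumes "cap_arc_ok key a b" "fst b = fst a"
  shows "oriented_seg key c (antipodal_corner a) (antipodal_corner b) = oriented_seg key c a b"
proof -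
  have "corner_seg c (antipodal_corner a) (antipodal_corner b) = corner_seg c a b"
    and "corner_seg c (antipodal_corner b) (antipodal_corner a) = corner_seg c b a"
    using assms by (auto intro!: corner_seg_antipodal_arc simp: cap_arc_ok_def)
  then show ?thesis
    using assms(1) by (simp add: oriented_seg_def cap_arc_ok_def)
qed

text \<open>Normal form of a term: orient the segment by \<open>key\<close>, and replace a cap arc by whichever of it
  and its antipodal arc has the smaller code.\<close>
definition reorient_term :: "(corner \<Rightarrow> int) \<Rightarrow> seg_term \<Rightarrow> seg_term" where
  "reorient_term key t =
     (if key (fst (snd t)) < key (snd (snd t)) then t else (- fst t, (snd (snd t), fst (snd t))))"

definition corner_code :: "corner \<Rightarrow> int" where
  "corner_code a = int (fst a) * 20 + int (snd a)"

definition corner_pair_code :: "corner \<times> corner \<Rightarrow> int" where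
  "corner_pair_code p = corner_code (fst p) * 400 + corner_code (snd p)"

definition canonical_arc_term :: "seg_term \<Rightarrow> seg_term" where
  "canonical_arc_term t =
     (let a = fst (snd t); b = snd (snd t); p = (antipodal_corner a, antipodal_corner b) in
      if fst a = fst b \<and> corner_pair_code p < corner_pair_code (a, b) then (fst t, p) else t)"

definition normal_term :: "(corner \<Rightarrow> int) \<Rightarrow> seg_term \<Rightarrow> seg_term" where
  "normal_term key t = canonical_arc_term (reorient_term key t)"

definition term_ok :: "(corner \<Rightarrow> int) \<Rightarrow> seg_term \<Rightarrow> bool" where
  "term_ok key t \<longleftrightarrow> key (fst (snd t)) \<noteq> key (snd (snd t)) \<and>
     (fst (fst (snd t)) = fst (snd (snd t)) \<longrightarrow> cap_arc_ok key (fst (snd t)) (snd (snd t)))"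

lemma frag_cmul_uminus_both: "frag_cmul (- k) (- x) = frag_cmul k x"
proof -
  have "frag_cmul (- k) (- x) = frag_cmul (- k) (frag_cmul (- 1) x)"
    by simp
  also have "\<dots> = frag_cmul (- k * - 1) x"
    by (rule frag_cmul_cmul)
  finally show ?thesis
    by simp
qed

lemma terms_chain_normal_term:
  assumes "term_ok key t"
  shows "terms_chain key c [normal_term key t] = terms_chain key c [t]"
proof -
  obtain k a b where t: "t = (k, (a, b))"
    by (metis prod.collapse)
  have ab: "key a \<noteq> key b"
    using assms t by (simp add: term_ok_def)
  define r where "r = reorient_term key t"
  have "terms_chain key c [r] = terms_chain key c [t]"
    using oriented_seg_swap[OF ab, of c] by (auto simp: r_def reorient_term_def t frag_cmul_uminus_both)
  moreover have "cap_arc_ok key (fst (snd r)) (snd (snd r))" if "fst (fst (snd r)) = fst (snd (snd r))"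
  proof -
    have "fst a = fst b"
      using that by (auto simp: r_def reorient_term_def t split: if_splits)
    then have "cap_arc_ok key a b" "cap_arc_ok key b a"
      using assms ab by (auto simp: t term_ok_def cap_arc_ok_def)
    then show ?thesis
      by (auto simp: r_def reorient_term_def t)
  qed
  then have "terms_chain key c [canonical_arc_term r] = terms_chain key c [r]"
    using oriented_seg_antipodal_arc[of key "fst (snd r)" "snd (snd r)" c]
    by (auto simp: canonical_arc_term_def Let_def)
  ultimately show ?thesis
    by (simp add: normal_term_def r_def)
qed

lemma terms_chain_map_normal_term:
  "list_all (term_ok key) ts \<Longrightarrow> terms_chain key c (map (normal_term key) ts) = terms_chain key c ts"
  by (induction ts) (use terms_chain_normal_term in auto)

section \<open>The chain \<open>u_edge\<close> and certificates for its divisibility\<close>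

definition neighbours :: "nat \<Rightarrow> nat list" where
  "neighbours i = filter (adjacent_code i) [0..<20]"

lemma dodec_adjacent_vertex_eq_neighbours:
  assumes "i < 20"
  shows "Collect (dodec_adjacent (vertex i)) = vertex ` set (neighbours i)"
proof -
  have "dodec_adjacent (vertex i) w \<longleftrightarrow> (\<exists>j<20. w = vertex j \<and> adjacent_code i j)" for w
    using dodec_adjacent_vertex_iff[OF assms] dodec_adjacent_iff_inner by (auto simp: dodec_vertices_eq)
  then show ?thesis
    by (auto simp: neighbours_def image_iff)
qed

lemma chain_boundary_delta:
  assumes "dodec_adjacent v w"
  shows "chain_boundary 1 (delta c v w) = 0"
proof -
  let ?t = "cut_frac c"
  let ?P = "v + ?t *\<^sub>R (w - v)" and ?Q = "w + ?t *\<^sub>R (v - w)"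
  have vw: "v \<in> dodec_vertices" "w \<in> dodec_vertices" "v \<bullet> w = sqrt 5"
    using assms by (auto simp: dodec_adjacent_iff_inner)
  have P: "?P \<bullet> v = c" and Q: "?Q \<bullet> w = c"
    using vw inner_dodec_vertex_self[OF vw(1)] inner_dodec_vertex_self[OF vw(2)] cut_frac_mult[of c]
    by (simp_all add: inner_add_left inner_diff_left inner_commute algebra_simps)
  have "point_simplex c (- ?P) = point_simplex c ?P" "point_simplex c (- ?Q) = point_simplex c ?Q"
    using sigma_class_uminus_on_cap_boundary[OF vw(1) P] sigma_class_uminus_on_cap_boundary[OF vw(2) Q]
    by (simp_all add: point_simplex_def)
  moreover have "- v + ?t *\<^sub>R (- w - - v) = - ?P" "- w + ?t *\<^sub>R (- v - - w) = - ?Q"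
    by (simp_all add: algebra_simps)
  then have "delta c v w = frag_of (seg_simplex c ?P ?Q) - frag_of (seg_simplex c (- ?P) (- ?Q))"
    by (simp only: delta_def edge_cell_def)
  ultimately show ?thesis
    by (simp only: chain_boundary_diff chain_boundary_seg_simplex) simp
qed

lemma chain_boundary_u_edge: "chain_boundary 1 (u_edge c E) = 0"
  unfolding u_edge_def by (simp add: chain_boundary_sum chain_boundary_delta[unfolded One_nat_def])

definition edge_terms :: "nat \<Rightarrow> nat \<Rightarrow> seg_term list" where
  "edge_terms i j = [(1, ((i, j), (j, i))), (-1, (antipodal_corner (i, j), antipodal_corner (j, i)))]"

definition u_edge_terms :: "nat list \<Rightarrow> seg_term list" where
  "u_edge_terms Es = concat (map (\<lambda>i. concat (map (edge_terms i) (neighbours i))) Es)"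

definition edges_increasing :: "(corner \<Rightarrow> int) \<Rightarrow> nat list \<Rightarrow> bool" where
  "edges_increasing key Es \<longleftrightarrow> distinct Es \<and> list_all (\<lambda>i. i < 20 \<and> list_all (\<lambda>j.
     key (i, j) < key (j, i) \<and> key (antipodal_corner (i, j)) < key (antipodal_corner (j, i))) (neighbours i)) Es"

lemma delta_eq_terms_chain:
  assumes "i < 20" "j < 20" "key (i, j) < key (j, i)"
    and "key (antipodal_corner (i, j)) < key (antipodal_corner (j, i))"
  shows "delta c (vertex i) (vertex j) = terms_chain key c (edge_terms i j)"
proof -
  have "edge_cell c (- vertex i) (- vertex j) = corner_seg c (antipodal_corner (i, j)) (antipodal_corner (j, i))"
    using assms(1,2) by (simp add: edge_cell_def corner_seg_def cut_point_def antipodal_corner_def vertex_antipode)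
  moreover have "edge_cell c (vertex i) (vertex j) = corner_seg c (i, j) (j, i)"
    by (simp add: edge_cell_def corner_seg_def cut_point_def)
  ultimately show ?thesis
    using assms(3,4) by (simp add: delta_def edge_terms_def oriented_seg_def)
qed

lemma u_edge_eq_terms_chain:
  assumes "edges_increasing key Es"
  shows "u_edge c (vertex ` set Es) = terms_chain key c (u_edge_terms Es)"
proof -
  have Es: "distinct Es" "set Es \<subseteq> {..<20}"
    using assms by (auto simp: edges_increasing_def list_all_iff)
  have at_vertex: "(\<Sum>w\<in>Collect (dodec_adjacent (vertex i)). delta c (vertex i) w)
      = terms_chain key c (concat (map (edge_terms i) (neighbours i)))" if i: "i \<in> set Es" for i
  proof -
    have i20: "i < 20"
      using Es i by auto
    have nb: "set (neighbours i) \<subseteq> {..<20}"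
      by (auto simp: neighbours_def)
    have "(\<Sum>w\<in>Collect (dodec_adjacent (vertex i)). delta c (vertex i) w)
        = (\<Sum>j\<leftarrow>neighbours i. delta c (vertex i) (vertex j))"
      unfolding dodec_adjacent_vertex_eq_neighbours[OF i20] sum.reindex[OF inj_on_subset[OF vertex_inj nb]]
      by (simp add: sum_list_distinct_conv_sum_set neighbours_def)
    also have "\<dots> = (\<Sum>j\<leftarrow>neighbours i. terms_chain key c (edge_terms i j))"
      using assms i nb
      by (intro arg_cong[where f = sum_list] map_cong refl delta_eq_terms_chain)
         (auto simp: edges_increasing_def list_all_iff)
    also have "\<dots> = terms_chain key c (concat (map (edge_terms i) (neighbours i)))"
      by (simp add: terms_chain_concat)
    finally show ?thesis .
  qed
  have "u_edge c (vertex ` set Es) = (\<Sum>i\<leftarrow>Es. \<Sum>w\<in>Collect (dodec_adjacent (vertex i)). delta c (vertex i) w)"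
    unfolding u_edge_def
    by (simp add: sum.reindex inj_on_subset[OF vertex_inj Es(2)] sum_list_distinct_conv_sum_set Es(1))
  also have "\<dots> = terms_chain key c (u_edge_terms Es)"
    unfolding u_edge_terms_def terms_chain_concat[of key c _ Es] using at_vertex
    by (intro arg_cong[where f = sum_list] map_cong) auto
  finally show ?thesis .
qed

text \<open>The ten corners of a face in cyclic order: the decagon that remains of the pentagon.\<close>
definition face_corners :: "nat list \<Rightarrow> corner list" where
  "face_corners f = concat (map (\<lambda>k. [(f ! k, f ! ((k + 1) mod 5)), (f ! ((k + 1) mod 5), f ! k)]) [0..<5])"

definition face_corners_ok :: "nat list \<Rightarrow> bool" where
  "face_corners_ok f \<longleftrightarrow> list_all (\<lambda>a. fst a \<in> set f \<and> snd a \<in> set f \<and> fst a < 20 \<and> snd a < 20 \<and>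
     adjacent_code (fst a) (snd a)) (face_corners f)"

lemma face_codes_corners_ok: "list_all face_corners_ok face_codes"
  unfolding face_codes_def face_corners_ok_def face_corners_def by code_simp

lemma length_face_corners: "length (face_corners f) = 10"
  by (simp add: face_corners_def upt_rec)

lemma cut_point_face_corner:
  assumes "small_caps c" "f \<in> set face_codes" "a \<in> set (face_corners f)"
  shows "cut_point c a \<in> face_piece c f"
proof -
  have "face_corners_ok f"
    using face_codes_corners_ok assms(2) by (simp add: list_all_iff)
  then show ?thesis
    using assms(3) cut_point_in_face_piece[OF assms(1), of "fst a" f "snd a"]
    by (simp add: face_corners_ok_def list_all_iff)
qed

definition in_common_face :: "corner \<times> corner \<Rightarrow> bool" where
  "in_common_face p \<longleftrightarrow> list_ex (\<lambda>f. fst p \<in> set (face_corners f) \<and> snd p \<in> set (face_corners f)) face_codes"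

lemma singular_chain_oriented_seg:
  assumes "small_caps c" "in_common_face (a, b)"
  shows "singular_chain 1 (Sigma_top c) (oriented_seg key c a b)"
proof -
  obtain f where f: "f \<in> set face_codes" "a \<in> set (face_corners f)" "b \<in> set (face_corners f)"
    using assms(2) by (auto simp: in_common_face_def list_ex_iff)
  have "singular_simplex 1 (Sigma_top c) (corner_seg c x y)"
    if "x \<in> set (face_corners f)" "y \<in> set (face_corners f)" for x y
    unfolding corner_seg_def using that cut_point_face_corner[OF assms(1) f(1)]
    by (intro singular_simplex_seg_simplex[OF convex_face_piece face_piece_subset_Sigma_hat[OF f(1)]])
  then show ?thesis
    using f by (simp add: oriented_seg_def singular_chain_of singular_chain_minus)
qed

lemma singular_chain_terms_chain:
  "small_caps c \<Longrightarrow> list_all (\<lambda>t. in_common_face (snd t)) ts \<Longrightarrow>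
     singular_chain 1 (Sigma_top c) (terms_chain key c ts)"
  by (induction ts)
     (auto intro!: singular_chain_add singular_chain_cmul singular_chain_oriented_seg[unfolded One_nat_def])

lemma singular_chain_polygon_chain:
  assumes "small_caps c" "f \<in> set face_codes"
  shows "singular_chain 2 (Sigma_top c) (polygon_chain key c (face_corners f))"
proof -
  have K: "convex (face_piece c f)" "face_piece c f \<subseteq> Sigma_hat c"
    by (simp_all add: convex_face_piece face_piece_subset_Sigma_hat[OF assms(2)])
  have tri: "singular_chain 2 (Sigma_top c) (oriented_tri key c x a b)"
    if x: "x \<in> set (face_corners f)" and a: "a \<in> set (face_corners f)" and b: "b \<in> set (face_corners f)"
    for x a b
  proof -
    have "cut_point c x \<in> face_piece c f" "cut_point c a \<in> face_piece c f" "cut_point c b \<in> face_piece c f"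
      using cut_point_face_corner[OF assms] x a b by blast+
    then show ?thesis
      by (simp add: oriented_tri_def singular_chain_of singular_chain_minus corner_tri_def
                    singular_simplex_tri_simplex[OF K])
  qed
  have "singular_chain 2 (Sigma_top c) (fan_chain key c x cs)"
    if "x \<in> set (face_corners f)" "set cs \<subseteq> set (face_corners f)" for x cs
    using that(2) by (induction cs rule: induct_list012) (auto intro!: singular_chain_add tri[OF that(1)])
  moreover have "face_corners f \<noteq> []"
    using length_face_corners[of f] by auto
  ultimately show ?thesis
    unfolding polygon_chain_def by (simp add: list.set_sel subsetI)
qed

text \<open>Faces are given by (weight, face index) pairs.\<close>
definition faces_chain :: "(corner \<Rightarrow> int) \<Rightarrow> real \<Rightarrow> (int \<times> nat) list \<Rightarrow> (real^3) set chain" where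
  "faces_chain key c fs = (\<Sum>e\<leftarrow>fs. frag_cmul (fst e) (polygon_chain key c (face_corners (face_codes ! snd e))))"

definition faces_boundary_terms :: "(int \<times> nat) list \<Rightarrow> seg_term list" where
  "faces_boundary_terms fs = concat (map (\<lambda>e. map (\<lambda>t. (fst e * fst t, snd t))
     (path_terms (face_corners (face_codes ! snd e) @ [hd (face_corners (face_codes ! snd e))]))) fs)"

definition faces_ok :: "(corner \<Rightarrow> int) \<Rightarrow> (int \<times> nat) list \<Rightarrow> bool" where
  "faces_ok key fs \<longleftrightarrow> list_all (\<lambda>e. snd e < 12 \<and> distinct (map key (face_corners (face_codes ! snd e)))) fs"

lemma chain_boundary_faces_chain:
  assumes "faces_ok key fs"
  shows "chain_boundary 2 (faces_chain key c fs) = terms_chain key c (faces_boundary_terms fs)"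
  using assms
proof (induction fs)
  case Nil
  then show ?case
    by (simp add: faces_chain_def faces_boundary_terms_def)
next
  case (Cons e fs)
  let ?cs = "face_corners (face_codes ! snd e)"
  have "chain_boundary 2 (polygon_chain key c ?cs) = terms_chain key c (path_terms (?cs @ [hd ?cs]))"
    using Cons.prems length_face_corners by (intro chain_boundary_polygon_chain) (auto simp: faces_ok_def)
  then show ?case
    using Cons by (simp add: faces_chain_def faces_boundary_terms_def faces_ok_def chain_boundary_add
                    chain_boundary_cmul terms_chain_scale)
qed

lemma singular_chain_faces_chain:
  assumes "small_caps c" "faces_ok key fs"
  shows "singular_chain 2 (Sigma_top c) (faces_chain key c fs)"
proof -
  have "length face_codes = 12"
    by (simp add: face_codes_def)
  then have "face_codes ! snd e \<in> set face_codes" if "e \<in> set fs" for e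
    using assms(2) that by (simp add: faces_ok_def list_all_iff)
  then show ?thesis
    unfolding faces_chain_def using assms(1)
    by (induction fs) (auto intro!: singular_chain_add singular_chain_cmul singular_chain_polygon_chain)
qed

definition divisible_in_homology :: "nat \<Rightarrow> 'a topology \<Rightarrow> int \<Rightarrow> 'a chain \<Rightarrow> bool" where
  "divisible_in_homology p X k u \<longleftrightarrow>
     (\<exists>z. singular_relcycle p X {} z \<and> homologous_rel p X {} u (frag_cmul k z))"

lemma divisible_in_homology_0: "divisible_in_homology p X k 0"
  unfolding divisible_in_homology_def by (rule exI[of _ 0]) simp

lemma divisible_in_homology_uminus:
  assumes "divisible_in_homology p X k u"
  shows "divisible_in_homology p X k (- u)"
proof -
  obtain z where z: "singular_relcycle p X {} z" "homologous_rel p X {} u (frag_cmul k z)"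
    using assms by (auto simp: divisible_in_homology_def)
  have "frag_cmul k (- z) = frag_cmul k (frag_cmul (- 1) z)"
    by simp
  also have "\<dots> = - frag_cmul k z"
    by (simp del: frag_cmul_minus_one)
  finally have "frag_cmul k (- z) = - frag_cmul k z" .
  moreover have "homologous_rel p X {} (0 - u) (0 - frag_cmul k z)"
    by (rule homologous_rel_diff) (simp_all add: z(2))
  ultimately have "homologous_rel p X {} (- u) (frag_cmul k (- z))"
    by simp
  moreover have "singular_relcycle p X {} (- z)"
    using z(1) by (simp add: singular_relcycle_minus)
  ultimately show ?thesis
    unfolding divisible_in_homology_def by blast
qed

text \<open>A certificate: a key ordering the corners, the four vertices \<open>Es\<close>, weighted faces \<open>fs\<close> and
  a 1-chain \<open>zs\<close> (as terms) such that \<open>u_edge(Es) = \<partial>(faces) + 3 zs\<close>, which is checked by comparing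
  coefficients of normal forms.\<close>
definition certificate_ok :: "(corner \<Rightarrow> int) \<Rightarrow> nat list \<Rightarrow> (int \<times> nat) list \<Rightarrow> seg_term list \<Rightarrow> bool" where
  "certificate_ok key Es fs zs \<longleftrightarrow> edges_increasing key Es \<and> faces_ok key fs \<and>
     list_all (\<lambda>t. in_common_face (snd t)) zs \<and>
     (let U = u_edge_terms Es; R = faces_boundary_terms fs @ map (\<lambda>t. (3 * fst t, snd t)) zs;
          NU = map (normal_term key) U; NR = map (normal_term key) R in
      list_all (term_ok key) (U @ R) \<and> list_all (\<lambda>p. term_coeff NU p = term_coeff NR p) (map snd (NU @ NR)))"

theorem u_edge_divisible_by_3_if_certificate_ok:
  assumes "certificate_ok key Es fs zs" "small_caps c"
  shows "divisible_in_homology 1 (Sigma_top c) 3 (u_edge c (vertex ` set Es))"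
proof -
  let ?U = "u_edge_terms Es" and ?R = "faces_boundary_terms fs @ map (\<lambda>t. (3 * fst t, snd t)) zs"
  let ?z = "terms_chain key c zs" and ?D = "faces_chain key c fs"
  have ok: "edges_increasing key Es" "faces_ok key fs" "list_all (\<lambda>t. in_common_face (snd t)) zs"
    "list_all (term_ok key) ?U" "list_all (term_ok key) ?R"
    "list_all (\<lambda>p. term_coeff (map (normal_term key) ?U) p = term_coeff (map (normal_term key) ?R) p)
       (map snd (map (normal_term key) ?U @ map (normal_term key) ?R))"
    using assms(1) unfolding certificate_ok_def Let_def list_all_append by blast+
  have "u_edge c (vertex ` set Es) = terms_chain key c ?U"
    by (rule u_edge_eq_terms_chain[OF ok(1)])
  also have "\<dots> = terms_chain key c (map (normal_term key) ?U)"
    by (rule terms_chain_map_normal_term[OF ok(4), symmetric])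
  also have "\<dots> = terms_chain key c (map (normal_term key) ?R)"
    by (rule terms_chain_eq_if_term_coeff_eq[OF ok(6)])
  also have "\<dots> = terms_chain key c ?R"
    by (rule terms_chain_map_normal_term[OF ok(5)])
  also have "\<dots> = chain_boundary 2 ?D + frag_cmul 3 ?z"
    by (simp add: terms_chain_scale chain_boundary_faces_chain[OF ok(2)])
  finally have u: "u_edge c (vertex ` set Es) = chain_boundary 2 ?D + frag_cmul 3 ?z" .
  have D: "singular_chain 2 (Sigma_top c) ?D"
    by (rule singular_chain_faces_chain[OF assms(2) ok(2)])
  have z: "singular_chain 1 (Sigma_top c) ?z"
    by (rule singular_chain_terms_chain[OF assms(2) ok(3)])
  text \<open>\<open>\<partial>u_edge = 0\<close> and \<open>\<partial>\<partial> = 0\<close> give \<open>3 \<partial>z = 0\<close>, hence \<open>z\<close> is a cycle.\<close>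
  have "frag_cmul 3 (chain_boundary 1 ?z) = 0"
    using chain_boundary_u_edge[of c "vertex ` set Es"] chain_boundary_boundary[OF D] u
    by (simp add: chain_boundary_add chain_boundary_cmul)
  then have "singular_relcycle 1 (Sigma_top c) {} ?z"
    using z by (simp add: singular_cycle)
  moreover have "homologous_rel 1 (Sigma_top c) {} (u_edge c (vertex ` set Es)) (frag_cmul 3 ?z)"
    unfolding homologous_rel_def singular_boundary using D u
    by (intro exI[of _ ?D]) (simp add: numeral_2_eq_2)
  ultimately show ?thesis
    unfolding divisible_in_homology_def by blast
qed

section \<open>Inscribed cubes and tetrahedra\<close>

lemma inner_distinct_dodec_vertices:
  assumes "u \<in> dodec_vertices" "v \<in> dodec_vertices" "u \<noteq> v"
  shows "u \<bullet> v \<in> {sqrt 5, 1, -1, - sqrt 5, -3}"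
proof -
  obtain i j where ij: "i < 20" "j < 20" "u = vertex i" "v = vertex j"
    using assms by (auto simp: dodec_vertices_eq)
  then have "i \<noteq> j"
    using assms by auto
  then show ?thesis
    using vertex_inner_code_cases[OF ij(1,2)] ij by (auto simp: inner_vertex_code zsqrt5_val_def)
qed

lemma inner_eq_minus_3_imp_antipodal:
  assumes "u \<in> dodec_vertices" "v \<in> dodec_vertices" "u \<bullet> v = -3"
  shows "v = - u"
proof -
  have "(u + v) \<bullet> (u + v) = 0"
    using assms inner_dodec_vertex_self[OF assms(1)] inner_dodec_vertex_self[OF assms(2)]
    by (simp add: inner_add_left inner_add_right inner_commute)
  then show ?thesis
    by (simp add: add_eq_0_iff)
qed

lemma dist_sq_cube_points:
  assumes "u1 \<bullet> u2 = 0" "u1 \<bullet> u3 = 0" "u2 \<bullet> u3 = 0" "u1 \<bullet> u1 = r" "u2 \<bullet> u2 = r" "u3 \<bullet> u3 = r"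
  shows "(dist (m + a1 *\<^sub>R u1 + a2 *\<^sub>R u2 + a3 *\<^sub>R u3) (m + b1 *\<^sub>R u1 + b2 *\<^sub>R u2 + b3 *\<^sub>R u3))\<^sup>2
           = ((a1 - b1)\<^sup>2 + (a2 - b2)\<^sup>2 + (a3 - b3)\<^sup>2) * r"
proof -
  have "(m + a1 *\<^sub>R u1 + a2 *\<^sub>R u2 + a3 *\<^sub>R u3) - (m + b1 *\<^sub>R u1 + b2 *\<^sub>R u2 + b3 *\<^sub>R u3)
      = (a1 - b1) *\<^sub>R u1 + (a2 - b2) *\<^sub>R u2 + (a3 - b3) *\<^sub>R u3"
    by (simp add: algebra_simps)
  moreover have "(x *\<^sub>R u1 + y *\<^sub>R u2 + z *\<^sub>R u3) \<bullet> (x *\<^sub>R u1 + y *\<^sub>R u2 + z *\<^sub>R u3) = (x\<^sup>2 + y\<^sup>2 + z\<^sup>2) * r"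
    for x y z
    using assms by (simp add: inner_add_left inner_add_right inner_commute power2_eq_square algebra_simps)
  ultimately show ?thesis
    by (simp add: dist_norm power2_norm_eq_inner)
qed

text \<open>An inscribed cube has edge length 2: the squared distances \<open>4r\<close> and \<open>12r\<close> (edge and
  diagonal) must both come from the list \<open>6 - 2 (u \<bullet> v)\<close> of squared distances between vertices of
  \<open>D\<close>, which forces \<open>r = 1\<close>.\<close>
lemma dist_sq_inscribed_cube:
  assumes "e \<in> inscribed_cubes" "x \<in> e" "y \<in> e"
  shows "(dist x y)\<^sup>2 \<in> {0, 4, 8, 12}"
proof -
  obtain m u1 u2 u3 where u: "u1 \<noteq> 0" "norm u2 = norm u1" "norm u3 = norm u1"
      "u1 \<bullet> u2 = 0" "u1 \<bullet> u3 = 0" "u2 \<bullet> u3 = 0"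
    and e: "e = {m + e1 *\<^sub>R u1 + e2 *\<^sub>R u2 + e3 *\<^sub>R u3 | e1 e2 e3. e1 \<in> {-1,1} \<and> e2 \<in> {-1,1} \<and> e3 \<in> {-1,1}}"
    using assms(1) by (auto simp: inscribed_cubes_def is_cube_def)
  define r where "r = u1 \<bullet> u1"
  have r: "u1 \<bullet> u1 = r" "u2 \<bullet> u2 = r" "u3 \<bullet> u3 = r" "0 < r"
    using u by (auto simp: r_def power2_norm_eq_inner[symmetric])
  note dist_sq = dist_sq_cube_points[OF u(4-6) r(1-3)]
  have V: "e \<subseteq> dodec_vertices"
    using assms(1) by (simp add: inscribed_cubes_def)
  let ?p = "\<lambda>a1 a2 a3. m + a1 *\<^sub>R u1 + a2 *\<^sub>R u2 + a3 *\<^sub>R u3"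
  have in_e: "?p a1 a2 a3 \<in> e" if "a1 \<in> {-1,1}" "a2 \<in> {-1,1}" "a3 \<in> {-1,1}" for a1 a2 a3
    unfolding e using that by blast
  have pV: "?p 1 1 1 \<in> dodec_vertices" "?p (-1) 1 1 \<in> dodec_vertices" "?p (-1) (-1) (-1) \<in> dodec_vertices"
    using in_e[of 1 1 1] in_e[of "-1" 1 1] in_e[of "-1" "-1" "-1"] V by auto
  have "?p 1 1 1 \<bullet> ?p (-1) 1 1 = 3 - 2 * r" "?p 1 1 1 \<bullet> ?p (-1) (-1) (-1) = 3 - 6 * r"
    using dist_dodec_vertices_sq[OF pV(1,2)] dist_dodec_vertices_sq[OF pV(1,3)]
      dist_sq[of m 1 1 1 "-1" 1 1] dist_sq[of m 1 1 1 "-1" "-1" "-1"] by auto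
  moreover have "(dist (?p 1 1 1) (?p (-1) 1 1))\<^sup>2 \<noteq> 0" "(dist (?p 1 1 1) (?p (-1) (-1) (-1)))\<^sup>2 \<noteq> 0"
    using dist_sq[of m 1 1 1 "-1" 1 1] dist_sq[of m 1 1 1 "-1" "-1" "-1"] r(4) by simp_all
  then have "?p 1 1 1 \<noteq> ?p (-1) 1 1" "?p 1 1 1 \<noteq> ?p (-1) (-1) (-1)"
    by (metis dist_self zero_power2)+
  ultimately have "3 - 2 * r \<in> {sqrt 5, 1, -1, - sqrt 5, -3}" "3 - 6 * r \<in> {sqrt 5, 1, -1, - sqrt 5, -3}"
    using inner_distinct_dodec_vertices pV by metis+
  moreover have "sqrt 5 < (7 / 3 :: real)"
    by (rule real_less_lsqrt) (simp_all add: power2_eq_square)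
  ultimately have r1: "r = 1"
    using sqrt5_bounds by auto
  obtain a1 a2 a3 b1 b2 b3 where "x = ?p a1 a2 a3" "y = ?p b1 b2 b3"
    "a1 \<in> {-1,1}" "a2 \<in> {-1,1}" "a3 \<in> {-1,1}" "b1 \<in> {-1,1}" "b2 \<in> {-1,1}" "b3 \<in> {-1,1}"
    using assms(2,3) unfolding e by blast
  then show ?thesis
    using dist_sq[of m a1 a2 a3 b1 b2 b3] r1 by auto
qed

text \<open>Non-adjacent distinct vertices of an inscribed cube are at squared distance 8 or 12,
  i.e. have inner product \<open>-1\<close> or \<open>-3\<close>; four pairwise non-adjacent ones cannot contain an
  antipodal pair, so they form a regular tetrahedron with all inner products \<open>-1\<close>.\<close>
lemma inner_inscribed_tetrahedron:
  assumes e: "e \<in> inscribed_cubes" and E: "E \<subseteq> e" "card E = 4" "\<forall>x\<in>E. \<forall>y\<in>E. \<not> cube_adjacent e x y"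
  shows "E \<subseteq> dodec_vertices" "\<forall>x\<in>E. \<forall>y\<in>E. x \<noteq> y \<longrightarrow> x \<bullet> y = -1"
proof -
  have V: "e \<subseteq> dodec_vertices"
    using e by (simp add: inscribed_cubes_def)
  then show "E \<subseteq> dodec_vertices"
    using E by auto
  have pair: "x \<bullet> y \<in> {-1, -3}" if xyE: "x \<in> E" "y \<in> E" "x \<noteq> y" for x y
  proof -
    have xy: "x \<in> e" "y \<in> e"
      using xyE E by auto
    obtain z where z: "z \<in> e" "z \<noteq> x" "dist x z < dist x y"
      using E(3) xyE xy unfolding cube_adjacent_def by (auto simp: not_le)
    then have "4 \<le> (dist x z)\<^sup>2"
      using dist_sq_inscribed_cube[OF e xy(1) z(1)] by auto
    moreover have "(dist x z)\<^sup>2 < (dist x y)\<^sup>2"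
      using z(3) by (simp add: power_strict_mono)
    ultimately have "(dist x y)\<^sup>2 \<in> {8, 12}"
      using dist_sq_inscribed_cube[OF e xy] by auto
    moreover have "x \<in> dodec_vertices" "y \<in> dodec_vertices"
      using xy V by auto
    ultimately show ?thesis
      using dist_dodec_vertices_sq by auto
  qed
  show "\<forall>x\<in>E. \<forall>y\<in>E. x \<noteq> y \<longrightarrow> x \<bullet> y = -1"
  proof (intro ballI impI, rule ccontr)
    fix x y assume xy: "x \<in> E" "y \<in> E" "x \<noteq> y" "x \<bullet> y \<noteq> -1"
    then have "y = - x"
      using pair inner_eq_minus_3_imp_antipodal E(1) V by blast
    moreover have "card (E - {x, y}) = 2"
      using E(2) xy by (simp add: card_Diff_subset)
    then obtain z where "z \<in> E" "z \<noteq> x" "z \<noteq> y"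
      by (metis Diff_iff all_not_in_conv card.empty insertCI zero_neq_numeral)
    then have "z \<bullet> x \<in> {-1, -3}" "z \<bullet> y \<in> {-1, -3}"
      using pair xy by auto
    ultimately show False
      by auto
  qed
qed

definition minus_one_partners :: "nat list list" where
  "minus_one_partners = [[3, 5, 6, 11, 12, 16], [2, 4, 7, 8, 12, 19], [1, 4, 7, 9, 16, 17],
    [0, 5, 6, 9, 14, 19], [1, 2, 7, 10, 11, 18], [0, 3, 6, 8, 13, 18], [0, 3, 5, 10, 15, 17],
    [1, 2, 4, 13, 14, 15], [1, 5, 12, 13, 18, 19], [2, 3, 14, 16, 17, 19], [4, 6, 11, 15, 17, 18],
    [0, 4, 10, 12, 16, 18], [0, 1, 8, 11, 16, 19], [5, 7, 8, 14, 15, 18], [3, 7, 9, 13, 15, 19],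
    [6, 7, 10, 13, 14, 17], [0, 2, 9, 11, 12, 17], [2, 6, 9, 10, 15, 16], [4, 5, 8, 10, 11, 13],
    [1, 3, 8, 9, 12, 14]]"

lemma minus_one_partners_correct:
  "list_all (\<lambda>i. minus_one_partners ! i = filter (\<lambda>j. vertex_inner_code i j = (-4, 0)) [0..<20]) [0..<20]"
  unfolding minus_one_partners_def vertex_inner_code_def by code_simp

definition tetrahedra :: "nat list list" where
  "tetrahedra = [[0, 3, 5, 6], [0, 11, 12, 16], [1, 2, 4, 7], [1, 8, 12, 19], [2, 9, 16, 17],
    [3, 9, 14, 19], [4, 10, 11, 18], [5, 8, 13, 18], [6, 10, 15, 17], [7, 13, 14, 15]]"

text \<open>Two vertices at inner product \<open>-1\<close> determine their tetrahedron: it consists of them and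
  their common \<open>-1\<close>-partners.\<close>
lemma tetrahedra_complete:
  "list_all (\<lambda>i. list_all (\<lambda>j. sort (i # j # filter (\<lambda>k. k \<in> set (minus_one_partners ! j)) (minus_one_partners ! i))
     \<in> set tetrahedra) (minus_one_partners ! i)) [0..<20]"
  unfolding minus_one_partners_def tetrahedra_def by code_simp

lemma tetrahedra_wellformed:
  "list_all (\<lambda>T. distinct T \<and> length T = 4 \<and> list_all (\<lambda>i. i < 20) T) tetrahedra"
  unfolding tetrahedra_def by code_simp

lemma minus_one_partners_iff:
  assumes "i < 20" "j < 20"
  shows "j \<in> set (minus_one_partners ! i) \<longleftrightarrow> vertex i \<bullet> vertex j = -1"
  using inner_vertex_eq_iff[OF assms, of "(-4, 0)"] list_all_upt_nth[OF minus_one_partners_correct assms(1)] assms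
  by (simp add: zsqrt5_val_def)

lemma tetrahedron_through_minus_one_pair:
  assumes "i < 20" "j < 20" "vertex i \<bullet> vertex j = -1"
  shows "\<exists>T\<in>set tetrahedra. i \<in> set T \<and> j \<in> set T \<and>
           (\<forall>k<20. vertex i \<bullet> vertex k = -1 \<longrightarrow> vertex j \<bullet> vertex k = -1 \<longrightarrow> k \<in> set T)"
proof -
  let ?T = "i # j # filter (\<lambda>k. k \<in> set (minus_one_partners ! j)) (minus_one_partners ! i)"
  have "j \<in> set (minus_one_partners ! i)"
    using minus_one_partners_iff assms by blast
  then have "sort ?T \<in> set tetrahedra"
    using list_all_upt_nth[OF tetrahedra_complete assms(1)] unfolding list_all_iff by blast
  moreover have "set (sort ?T) = set ?T"
    by (rule set_sort)
  ultimately show ?thesis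
    using minus_one_partners_iff assms(1,2) by auto
qed

lemma regular_tetrahedron_in_tetrahedra:
  assumes "E \<subseteq> dodec_vertices" "card E = 4" "\<forall>x\<in>E. \<forall>y\<in>E. x \<noteq> y \<longrightarrow> x \<bullet> y = -1"
  shows "\<exists>T\<in>set tetrahedra. E = vertex ` set T"
proof -
  have "finite E"
    using assms(2) by (metis card.infinite zero_neq_numeral)
  moreover have "\<not> card E \<le> Suc 0"
    using assms(2) by simp
  ultimately obtain x y where xy: "x \<in> E" "y \<in> E" "x \<noteq> y"
    using card_le_Suc0_iff_eq by blast
  have "x \<in> vertex ` {..<20}" "y \<in> vertex ` {..<20}"
    using xy assms(1) by (auto simp: dodec_vertices_eq)
  then obtain i j where ij: "i < 20" "j < 20" "x = vertex i" "y = vertex j"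
    by blast
  obtain T where T: "T \<in> set tetrahedra" "i \<in> set T" "j \<in> set T"
    and partners: "\<And>k. k < 20 \<Longrightarrow> vertex i \<bullet> vertex k = -1 \<Longrightarrow> vertex j \<bullet> vertex k = -1 \<Longrightarrow> k \<in> set T"
    using tetrahedron_through_minus_one_pair[OF ij(1,2)] assms(3) xy ij by blast
  have "E \<subseteq> vertex ` set T"
  proof
    fix z assume z: "z \<in> E"
    then obtain k where k: "k < 20" "z = vertex k"
      using assms(1) by (auto simp: dodec_vertices_eq)
    show "z \<in> vertex ` set T"
    proof (cases "k = i \<or> k = j")
      case True
      then show ?thesis
        using T k by auto
    next
      case False
      then have "vertex k \<noteq> vertex i" "vertex k \<noteq> vertex j"
        using inj_onD[OF vertex_inj] ij(1,2) k(1) by blast+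
      then show ?thesis
        using partners[OF k(1)] assms(3) xy z ij k by auto
    qed
  qed
  moreover have "card (vertex ` set T) = 4"
    using tetrahedra_wellformed T(1) inj_on_subset[OF vertex_inj]
    by (auto simp: list_all_iff card_image distinct_card subset_iff)
  ultimately have "E = vertex ` set T"
    using assms(2) by (metis card_subset_eq finite_imageI finite_set)
  then show ?thesis
    using T(1) by blast
qed

section \<open>The certificates\<close>

text \<open>Corners are ordered first by whether their vertex lies in \<open>CL\<close>, then by the smaller of the
  codes of the corner and of its antipode; this keeps antipodal corners together, so that the
  antipodal map respects the orientation of the cap arcs occurring in the certificates.\<close>
definition corner_key :: "nat list \<Rightarrow> corner \<Rightarrow> int" where
  "corner_key CL a = (if fst a \<in> set CL then 0 else 160000)
     + min (corner_code a) (corner_code (antipodal_corner a)) * 400 + corner_code a"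

text \<open>One certificate \<open>(CL, Es, fs, zs)\<close> for each antipodal pair of tetrahedra.\<close>
definition certificates :: "(nat list \<times> nat list \<times> (int \<times> nat) list \<times> seg_term list) list" where
  "certificates =
    [([0, 1, 2, 3, 4, 5, 6, 7], [0, 3, 5, 6],
      [(-1,0), (1,1), (-1,2), (1,4), (1,5), (1,8), (-1,9), (-1,10)],
      [(1,((0,10),(10,0))), (-1,((1,13),(13,1))), (-1,((2,10),(10,2))), (1,((3,13),(13,3))),
       (-1,((4,16),(16,4))), (1,((5,19),(19,5))), (1,((6,16),(16,6))), (-1,((7,19),(19,7)))]),
     ([0, 7, 11, 12, 13, 14, 15, 16], [0, 11, 12, 16],
      [(1,0), (1,2), (1,4), (-1,6), (-1,7), (1,8), (-1,9), (-1,10)],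
      [(1,((0,8),(8,0))), (-1,((7,17),(17,7))), (1,((11,17),(17,11))), (1,((12,3),(3,12))),
       (-1,((13,3),(3,13))), (-1,((14,8),(8,14))), (-1,((15,4),(4,15))), (1,((16,4),(4,16)))]),
     ([1, 6, 8, 10, 12, 15, 17, 19], [1, 8, 12, 19],
      [(-1,1), (1,4), (-1,5), (-1,6), (-1,7), (1,8), (1,9), (1,10)],
      [(1,((1,13),(13,1))), (-1,((6,16),(16,6))), (1,((8,4),(4,8))), (-1,((10,13),(13,10))),
       (1,((12,3),(3,12))), (-1,((15,4),(4,15))), (-1,((17,3),(3,17))), (1,((19,16),(16,19)))]),
     ([2, 5, 8, 9, 13, 16, 17, 18], [2, 9, 16, 17],
      [(1,0), (1,1), (1,2), (-1,4), (1,5), (-1,6), (-1,7), (-1,8)],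
      [(1,((2,10),(10,2))), (-1,((5,19),(19,5))), (-1,((8,0),(0,8))), (1,((9,0),(0,9))),
       (-1,((13,10),(10,13))), (1,((16,19),(19,16))), (1,((17,7),(7,17))), (-1,((18,7),(7,18)))]),
     ([3, 4, 9, 10, 11, 14, 18, 19], [3, 9, 14, 19],
      [(-1,0), (1,1), (-1,2), (1,5), (-1,6), (-1,7), (1,9), (1,10)],
      [(1,((3,17),(17,3))), (-1,((4,8),(8,4))), (1,((9,0),(0,9))), (-1,((10,0),(0,10))),
       (-1,((11,17),(17,11))), (1,((14,8),(8,14))), (-1,((18,7),(7,18))), (1,((19,7),(7,19)))])]"

abbreviation certificate_ok_at :: "nat \<Rightarrow> bool" where
  "certificate_ok_at k \<equiv> (case certificates ! k of (CL, Es, fs, zs) \<Rightarrow> certificate_ok (corner_key CL) Es fs zs)"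

lemma certificate_ok_0: "certificate_ok_at 0"
  unfolding certificates_def by code_simp

lemma certificate_ok_1: "certificate_ok_at 1"
  unfolding certificates_def by code_simp

lemma certificate_ok_2: "certificate_ok_at 2"
  unfolding certificates_def by code_simp

lemma certificate_ok_3: "certificate_ok_at 3"
  unfolding certificates_def by code_simp

lemma certificate_ok_4: "certificate_ok_at 4"
  unfolding certificates_def by code_simp

lemma certificates_ok: "list_all (\<lambda>(CL, Es, fs, zs). certificate_ok (corner_key CL) Es fs zs) certificates"
proof -
  have "length certificates = 5"
    by (simp add: certificates_def)
  moreover have "certificate_ok_at k" if "k < 5" for k
    using that certificate_ok_0 certificate_ok_1 certificate_ok_2 certificate_ok_3 certificate_ok_4
    by (auto simp: less_Suc_eq numeral_eq_Suc)
  ultimately show ?thesis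
    by (auto simp: list_all_length)
qed

lemma tetrahedra_certified:
  "list_all (\<lambda>T. list_ex (\<lambda>(CL, Es, fs, zs). set T = set Es \<or> set T = set (map antipode Es)) certificates)
     tetrahedra"
  unfolding certificates_def tetrahedra_def antipode_def antipode_codes_def by code_simp

lemma u_edge_tetrahedron_divisible_by_3:
  assumes "small_caps c" "T \<in> set tetrahedra"
  shows "divisible_in_homology 1 (Sigma_top c) 3 (u_edge c (vertex ` set T))"
proof -
  obtain CL Es fs zs where cert: "certificate_ok (corner_key CL) Es fs zs"
    and T: "set T = set Es \<or> set T = set (map antipode Es)"
    using tetrahedra_certified certificates_ok assms(2) by (fastforce simp: list_all_iff list_ex_iff)
  have Es: "divisible_in_homology 1 (Sigma_top c) 3 (u_edge c (vertex ` set Es))"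
    by (rule u_edge_divisible_by_3_if_certificate_ok[OF cert assms(1)])
  have "set Es \<subseteq> {..<20}"
    using cert by (auto simp: certificate_ok_def edges_increasing_def list_all_iff)
  then have "vertex ` set (map antipode Es) = uminus ` vertex ` set Es"
    by (auto simp: image_image vertex_antipode intro!: image_cong)
  then show ?thesis
    using T Es divisible_in_homology_uminus[OF Es] by (auto simp: u_edge_uminus)
qed

theorem corollary3p8:
  fixes c :: real and e E :: "(real^3) set"
  assumes "sqrt 5 < c" and "c < 3"
    and "e \<in> inscribed_cubes"
    and "E \<subseteq> e" and "card E = 4" and "\<forall>x\<in>E. \<forall>y\<in>E. \<not> cube_adjacent e x y"
  shows "\<exists>z. singular_relcycle 1 (Sigma_top c) {} z \<and>
             homologous_rel 1 (Sigma_top c) {} (u_edge c E) (frag_cmul 3 z)"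
proof (cases "c \<le> (3 + sqrt 5) / 2")
  case True
  \<comment> \<open>this case covers all \<open>c \<le> (3 + \<surd>5)/2\<close>\<close>
  then show ?thesis
    using divisible_in_homology_0 by (simp add: u_edge_eq_0_if_caps_meet divisible_in_homology_def)
next
  case False
  then have "small_caps c"
    using assms(2) by (simp add: small_caps_def)
  obtain T where "T \<in> set tetrahedra" "E = vertex ` set T"
    using regular_tetrahedron_in_tetrahedra inner_inscribed_tetrahedron[OF assms(3-6)] assms(5) by blast
  then show ?thesis
    using u_edge_tetrahedron_divisible_by_3[OF \<open>small_caps c\<close>] by (simp add: divisible_in_homology_def)
qed

end
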